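(* Let $S$ be an inverse semigroup (with zero), let $\beta\colon S\to\mathsf{B}(S)$ be its Booleanization, let $I$ be the Cuntz-Krieger ideal of $\mathsf{B}(S)$, let $\mathsf{T}(S)=\mathsf{B}(S)/\varepsilon_I$ be the Exel completion of $S$, and let $\tau=\nu\circ\beta\colon S\to\mathsf{T}(S)$, where $\nu\colon\mathsf{B}(S)\to\mathsf{T}(S)$ is the natural quotient morphism. Then $\tau$ is a cover-to-join map, and it is universal among cover-to-join maps from $S$ to Boolean inverse semigroups: for every cover-to-join map $\theta\colon S\to T$ into a Boolean inverse semigroup $T$ there is a unique morphism of Boolean inverse semigroups $\theta'\colon\mathsf{T}(S)\to T$ such that $\theta'\circ\tau=\theta$.
   Context: All inverse semigroups have a zero and all homomorphisms preserve the zero; no identity element is assumed. For $s$ in an inverse semigroup, $\mathbf{d}(s)=s^{-1}s$, $\mathbf{r}(s)=ss^{-1}$; the natural partial order is $s\le t$ iff $s=t\,s^{-1}s$; $a^{\downarrow}=\{s: s\le a\}$. Elements $s,t$ are compatible ($s\sim t$) if $s^{-1}t$ and $st^{-1}$ are idempotents. An inverse semigroup is distributive if every compatible pair has a join and multiplication distributes over such joins; it is Boolean if moreover its semilattice of idempotents is a generalized Boolean algebra (a distributive lattice with bottom in which every principal order ideal is a unital Boolean algebra). In a Boolean inverse semigroup, if $b\le a$ then $a\setminus b$ denotes $a(\mathbf{d}(a)\setminus\mathbf{d}(b))$. A morphism of Boolean inverse semigroups is a zero-preserving homomorphism that preserves joins of compatible pairs. An additive ideal of a Boolean inverse semigroup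 is a semigroup ideal closed under joins of compatible pairs; for an additive ideal $I$ of $B$, $\varepsilon_I$ is the relation $(a,b)\in\varepsilon_I$ iff there is $c\le a,b$ with $a\setminus c,\ b\setminus c\in I$; it is a congruence and $B/\varepsilon_I$ is a Boolean inverse semigroup. A finite subset $\{a_1,\dots,a_m\}\subseteq a^{\downarrow}$ is a cover of $a$ if for every $0\ne x\le a$ there is $i$ with $x\wedge a_i\ne 0$ (elements of a principal order ideal are pairwise compatible and so have meets). A cover-to-join map is a homomorphism $\theta\colon S\to T$ into a Boolean inverse semigroup $T$ such that whenever $\{a_1,\dots,a_m\}$ is a cover of $a$, we have $\theta(a)=\theta(a_1)\vee\dots\vee\theta(a_m)$. The Booleanization of $S$ is a Boolean inverse semigroup $\mathsf{B}(S)$ with an injective homomorphism $\beta\colon S\to\mathsf{B}(S)$ such that for every homomorphism $\theta\colon S\to T$ into a Boolean inverse semigroup there is a unique morphism $\theta'\colon\mathsf{B}(S)\to T$ with $\theta'\beta=\theta$. The Cuntz-Krieger ideal $I$ of $\mathsf{B}(S)$ is the smallest additive ideal containing all elements $\beta(a)\setminus(\beta(a_1)\vee\dots\vee\beta(a_m))$ where $\{a_1,\dots,a_m\}$ is a cover of $a$ in $S$. *)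

theory Defs
  imports Main
begin

record 'a isg =
  car :: "'a set"
  mul :: "'a \<Rightarrow> 'a \<Rightarrow> 'a"
  zer :: 'a

definition inverse_semigroup :: "'a isg \<Rightarrow> bool" where
  "inverse_semigroup S \<longleftrightarrow>
     zer S \<in> car S
   \<and> (\<forall>a\<in>car S. \<forall>b\<in>car S. mul S a b \<in> car S)
   \<and> (\<forall>a\<in>car S. \<forall>b\<in>car S. \<forall>c\<in>car S. mul S (mul S a b) c = mul S a (mul S b c))
   \<and> (\<forall>a\<in>car S. mul S (zer S) a = zer S \<and> mul S a (zer S) = zer S)
   \<and> (\<forall>a\<in>car S. \<exists>!b. b \<in> car S \<and> mul S (mul S a b) a = a \<and> mul S (mul S b a) b = b)"

definition inv :: "'a isg \<Rightarrow> 'a \<Rightarrow> 'a" where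
  "inv S a = (THE b. b \<in> car S \<and> mul S (mul S a b) a = a \<and> mul S (mul S b a) b = b)"

definition dom :: "'a isg \<Rightarrow> 'a \<Rightarrow> 'a" where
  "dom S a = mul S (inv S a) a"

definition ran :: "'a isg \<Rightarrow> 'a \<Rightarrow> 'a" where
  "ran S a = mul S a (inv S a)"

definition idem :: "'a isg \<Rightarrow> 'a \<Rightarrow> bool" where
  "idem S e \<longleftrightarrow> e \<in> car S \<and> mul S e e = e"

definition Idem :: "'a isg \<Rightarrow> 'a set" where
  "Idem S = {e. idem S e}"

definition leq :: "'a isg \<Rightarrow> 'a \<Rightarrow> 'a \<Rightarrow> bool" where
  "leq S s t \<longleftrightarrow> s \<in> car S \<and> t \<in> car S \<and> s = mul S t (dom S s)"

definition down :: "'a isg \<Rightarrow> 'a \<Rightarrow> 'a set" where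
  "down S a = {s \<in> car S. leq S s a}"

definition compat :: "'a isg \<Rightarrow> 'a \<Rightarrow> 'a \<Rightarrow> bool" where
  "compat S s t \<longleftrightarrow> s \<in> car S \<and> t \<in> car S
     \<and> idem S (mul S (inv S s) t) \<and> idem S (mul S s (inv S t))"

definition is_lub_in :: "'a isg \<Rightarrow> 'a set \<Rightarrow> 'a set \<Rightarrow> 'a \<Rightarrow> bool" where
  "is_lub_in S X A x \<longleftrightarrow> x \<in> X \<and> (\<forall>a\<in>A. leq S a x)
     \<and> (\<forall>y\<in>X. (\<forall>a\<in>A. leq S a y) \<longrightarrow> leq S x y)"

definition is_glb_in :: "'a isg \<Rightarrow> 'a set \<Rightarrow> 'a set \<Rightarrow> 'a \<Rightarrow> bool" where
  "is_glb_in S X A x \<longleftrightarrow> x \<in> X \<and> (\<forall>a\<in>A. leq S x a)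
     \<and> (\<forall>y\<in>X. (\<forall>a\<in>A. leq S y a) \<longrightarrow> leq S y x)"

definition join_set :: "'a isg \<Rightarrow> 'a set \<Rightarrow> 'a" where
  "join_set S A = (THE x. is_lub_in S (car S) A x)"

definition join :: "'a isg \<Rightarrow> 'a \<Rightarrow> 'a \<Rightarrow> 'a" where
  "join S a b = join_set S {a, b}"

definition meet :: "'a isg \<Rightarrow> 'a \<Rightarrow> 'a \<Rightarrow> 'a" where
  "meet S a b = (THE x. is_glb_in S (car S) {a, b} x)"

definition Ejoin :: "'a isg \<Rightarrow> 'a \<Rightarrow> 'a \<Rightarrow> 'a" where
  "Ejoin S e f = (THE x. is_lub_in S (Idem S) {e, f} x)"

definition Emeet :: "'a isg \<Rightarrow> 'a \<Rightarrow> 'a \<Rightarrow> 'a" where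
  "Emeet S e f = (THE x. is_glb_in S (Idem S) {e, f} x)"

definition distributive_isg :: "'a isg \<Rightarrow> bool" where
  "distributive_isg S \<longleftrightarrow> inverse_semigroup S \<and>
     (\<forall>a\<in>car S. \<forall>b\<in>car S. compat S a b \<longrightarrow>
        (\<exists>x. is_lub_in S (car S) {a, b} x)
      \<and> (\<forall>s\<in>car S. mul S s (join S a b) = join S (mul S s a) (mul S s b)
                  \<and> mul S (join S a b) s = join S (mul S a s) (mul S b s)))"

text \<open>The idempotents form a generalized Boolean algebra: a distributive lattice with
  bottom 0 in which every principal order ideal is a unital Boolean algebra
  (i.e. relatively complemented).\<close>
definition gen_boolean_idem :: "'a isg \<Rightarrow> bool" where
  "gen_boolean_idem S \<longleftrightarrow>
     (\<forall>e\<in>Idem S. \<forall>f\<in>Idem S. (\<exists>x. is_lub_in S (Idem S) {e, f} x)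
                            \<and> (\<exists>x. is_glb_in S (Idem S) {e, f} x))
   \<and> (\<forall>e\<in>Idem S. \<forall>f\<in>Idem S. \<forall>g\<in>Idem S.
        Emeet S e (Ejoin S f g) = Ejoin S (Emeet S e f) (Emeet S e g))
   \<and> zer S \<in> Idem S \<and> (\<forall>e\<in>Idem S. leq S (zer S) e)
   \<and> (\<forall>e\<in>Idem S. \<forall>f\<in>Idem S. leq S f e \<longrightarrow>
        (\<exists>g\<in>Idem S. leq S g e \<and> Emeet S f g = zer S \<and> Ejoin S f g = e))"

definition boolean_isg :: "'a isg \<Rightarrow> bool" where
  "boolean_isg S \<longleftrightarrow> distributive_isg S \<and> gen_boolean_idem S"

text \<open>Relative complement e \ f of idempotents f <= e, and a \ b = a (d(a) \ d(b)) for b <= a.\<close>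
definition ecompl :: "'a isg \<Rightarrow> 'a \<Rightarrow> 'a \<Rightarrow> 'a" where
  "ecompl S e f = (THE g. g \<in> Idem S \<and> leq S g e \<and> Emeet S f g = zer S \<and> Ejoin S f g = e)"

definition bdiff :: "'a isg \<Rightarrow> 'a \<Rightarrow> 'a \<Rightarrow> 'a" where
  "bdiff S a b = mul S a (ecompl S (dom S a) (dom S b))"

definition hom :: "'a isg \<Rightarrow> 'b isg \<Rightarrow> ('a \<Rightarrow> 'b) \<Rightarrow> bool" where
  "hom S T f \<longleftrightarrow> (\<forall>a\<in>car S. f a \<in> car T)
     \<and> (\<forall>a\<in>car S. \<forall>b\<in>car S. f (mul S a b) = mul T (f a) (f b))
     \<and> f (zer S) = zer T"

definition bmorphism :: "'a isg \<Rightarrow> 'b isg \<Rightarrow> ('a \<Rightarrow> 'b) \<Rightarrow> bool" where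
  "bmorphism S T f \<longleftrightarrow> hom S T f
     \<and> (\<forall>a\<in>car S. \<forall>b\<in>car S. compat S a b \<longrightarrow> f (join S a b) = join T (f a) (f b))"

definition is_cover :: "'a isg \<Rightarrow> 'a \<Rightarrow> 'a set \<Rightarrow> bool" where
  "is_cover S a A \<longleftrightarrow> finite A \<and> A \<subseteq> down S a
     \<and> (\<forall>x\<in>down S a. x \<noteq> zer S \<longrightarrow> (\<exists>ai\<in>A. meet S x ai \<noteq> zer S))"

definition cover_to_join :: "'a isg \<Rightarrow> 'b isg \<Rightarrow> ('a \<Rightarrow> 'b) \<Rightarrow> bool" where
  "cover_to_join S T f \<longleftrightarrow> boolean_isg T \<and> hom S T f
     \<and> (\<forall>a\<in>car S. \<forall>A. is_cover S a A \<longrightarrow> is_lub_in T (car T) (f ` A) (f a))"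

section \<open>Booleanization (universal property w.r.t. targets of type 'c)\<close>

definition booleanization :: "'a isg \<Rightarrow> 'b isg \<Rightarrow> ('a \<Rightarrow> 'b) \<Rightarrow> 'c itself \<Rightarrow> bool" where
  "booleanization S B \<beta> (_ :: 'c itself) \<longleftrightarrow>
     boolean_isg B \<and> hom S B \<beta> \<and> inj_on \<beta> (car S)
   \<and> (\<forall>(T :: 'c isg) \<theta>. boolean_isg T \<and> hom S T \<theta> \<longrightarrow>
        (\<exists>\<theta>'. bmorphism B T \<theta>' \<and> (\<forall>s\<in>car S. \<theta>' (\<beta> s) = \<theta> s)
           \<and> (\<forall>\<theta>''. bmorphism B T \<theta>'' \<and> (\<forall>s\<in>car S. \<theta>'' (\<beta> s) = \<theta> s)
                 \<longrightarrow> (\<forall>x\<in>car B. \<theta>'' x = \<theta>' x))))"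

definition additive_ideal :: "'a isg \<Rightarrow> 'a set \<Rightarrow> bool" where
  "additive_ideal B I \<longleftrightarrow> I \<subseteq> car B
     \<and> (\<forall>s\<in>car B. \<forall>a\<in>I. mul B s a \<in> I \<and> mul B a s \<in> I)
     \<and> (\<forall>a\<in>I. \<forall>b\<in>I. compat B a b \<longrightarrow> join B a b \<in> I)"

definition ck_gens :: "'a isg \<Rightarrow> 'b isg \<Rightarrow> ('a \<Rightarrow> 'b) \<Rightarrow> 'b set" where
  "ck_gens S B \<beta> = {bdiff B (\<beta> a) (join_set B (\<beta> ` A)) | a A. a \<in> car S \<and> is_cover S a A}"

definition ck_ideal :: "'a isg \<Rightarrow> 'b isg \<Rightarrow> ('a \<Rightarrow> 'b) \<Rightarrow> 'b set" where
  "ck_ideal S B \<beta> = \<Inter>{I. additive_ideal B I \<and> ck_gens S B \<beta> \<subseteq> I}"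

definition eps :: "'a isg \<Rightarrow> 'a set \<Rightarrow> ('a \<times> 'a) set" where
  "eps B I = {(a, b). a \<in> car B \<and> b \<in> car B \<and>
     (\<exists>c\<in>car B. leq B c a \<and> leq B c b \<and> bdiff B a c \<in> I \<and> bdiff B b c \<in> I)}"

definition quot_isg :: "'a isg \<Rightarrow> ('a \<times> 'a) set \<Rightarrow> 'a set isg" where
  "quot_isg B R = \<lparr> car = car B // R,
     mul = (\<lambda>X Y. R `` {mul B (SOME x. x \<in> X) (SOME y. y \<in> Y)}),
     zer = R `` {zer B} \<rparr>"

definition exel :: "'a isg \<Rightarrow> 'b isg \<Rightarrow> ('a \<Rightarrow> 'b) \<Rightarrow> 'b set isg" where
  "exel S B \<beta> = quot_isg B (eps B (ck_ideal S B \<beta>))"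

definition nu :: "'a isg \<Rightarrow> 'b isg \<Rightarrow> ('a \<Rightarrow> 'b) \<Rightarrow> 'b \<Rightarrow> 'b set" where
  "nu S B \<beta> x = eps B (ck_ideal S B \<beta>) `` {x}"

definition tau :: "'a isg \<Rightarrow> 'b isg \<Rightarrow> ('a \<Rightarrow> 'b) \<Rightarrow> 'a \<Rightarrow> 'b set" where
  "tau S B \<beta> = nu S B \<beta> \<circ> \<beta>"

end

(*
  The relation eps_I is a congruence that respects joins of compatible pairs, and compatible
  classes have compatible representatives; hence B(S)/eps_I is again a Boolean inverse
  semigroup whose joins are images of joins in B(S). If {a_1, ..., a_m} covers a, then
  beta(a) \ (beta(a_1) v ... v beta(a_m)) lies in the Cuntz-Krieger ideal I, so beta(a) and the
  join are eps_I-related and tau sends covers to joins.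

  Conversely, a cover-to-join map theta extends to a morphism theta_1 on B(S). Its kernel is an
  additive ideal containing the Cuntz-Krieger generators, hence contains I, and a morphism that
  kills a \ c with c <= a identifies a and c; so theta_1 is constant on eps_I-classes and factors
  through the quotient. Uniqueness follows from uniqueness for the Booleanization, as a
  morphism on the quotient is determined by its composite with nu.
*)

theory Submission
  imports Defs
begin

section \<open>Inverse semigroups\<close>

locale inv_semigroup =
  fixes S :: "'a isg"
  assumes inverse_sg: "inverse_semigroup S"
begin

abbreviation M (infixl "\<cdot>" 70) where "x \<cdot> y \<equiv> mul S x y"
abbreviation iv where "iv x \<equiv> inv S x"
abbreviation C where "C \<equiv> car S"
abbreviation z where "z \<equiv> zer S"

lemma zer_in[simp]: "z \<in> C" using inverse_sg unfolding inverse_semigroup_def by blast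
lemma mul_in[simp]: "a \<in> C \<Longrightarrow> b \<in> C \<Longrightarrow> a \<cdot> b \<in> C" using inverse_sg unfolding inverse_semigroup_def by blast
lemma assoc[simp]: "a \<in> C \<Longrightarrow> b \<in> C \<Longrightarrow> c \<in> C \<Longrightarrow> (a \<cdot> b) \<cdot> c = a \<cdot> (b \<cdot> c)"
  using inverse_sg unfolding inverse_semigroup_def by blast
lemma zer_mul[simp]: "a \<in> C \<Longrightarrow> z \<cdot> a = z" using inverse_sg unfolding inverse_semigroup_def by blast
lemma mul_zer[simp]: "a \<in> C \<Longrightarrow> a \<cdot> z = z" using inverse_sg unfolding inverse_semigroup_def by blast

lemma inv_is_inverse: assumes "a \<in> C" shows "iv a \<in> C \<and> a \<cdot> iv a \<cdot> a = a \<and> iv a \<cdot> a \<cdot> iv a = iv a"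
proof -
  have "\<exists>!b. b \<in> C \<and> a \<cdot> b \<cdot> a = a \<and> b \<cdot> a \<cdot> b = b" using inverse_sg assms unfolding inverse_semigroup_def by blast
  then show ?thesis unfolding inv_def by (rule theI')
qed

lemma inv_in[simp]: "a \<in> C \<Longrightarrow> iv a \<in> C" using inv_is_inverse by blast
lemma mul_inv_mul[simp]: "a \<in> C \<Longrightarrow> a \<cdot> (iv a \<cdot> a) = a" using inv_is_inverse by auto
lemma inv_mul_inv[simp]: "a \<in> C \<Longrightarrow> iv a \<cdot> (a \<cdot> iv a) = iv a" using inv_is_inverse by auto
lemma mul_inv_mul_left[simp]: "a \<in> C \<Longrightarrow> x \<in> C \<Longrightarrow> a \<cdot> (iv a \<cdot> (a \<cdot> x)) = a \<cdot> x"
  by (metis assoc mul_inv_mul inv_in mul_in)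
lemma inv_mul_inv_left[simp]: "a \<in> C \<Longrightarrow> x \<in> C \<Longrightarrow> iv a \<cdot> (a \<cdot> (iv a \<cdot> x)) = iv a \<cdot> x"
  by (metis assoc inv_mul_inv inv_in mul_in)

lemma inv_unique: assumes "a \<in> C" "b \<in> C" "a \<cdot> b \<cdot> a = a" "b \<cdot> a \<cdot> b = b" shows "iv a = b"
proof -
  have "\<exists>!b. b \<in> C \<and> a \<cdot> b \<cdot> a = a \<and> b \<cdot> a \<cdot> b = b" using inverse_sg assms unfolding inverse_semigroup_def by blast
  then show ?thesis using assms inv_is_inverse[OF assms(1)] by blast
qed

lemma idem_in: "idem S e \<Longrightarrow> e \<in> C" by (simp add: idem_def)
lemma idem_mul_self[simp]: "idem S e \<Longrightarrow> e \<cdot> e = e" by (simp add: idem_def)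
lemma idem_mul_self_left[simp]: "idem S e \<Longrightarrow> x \<in> C \<Longrightarrow> e \<cdot> (e \<cdot> x) = e \<cdot> x"
  by (metis assoc idem_def)
lemma idem_zer[simp]: "idem S z" by (simp add: idem_def)

lemma inv_idem[simp]: "idem S e \<Longrightarrow> iv e = e"
  by (rule inv_unique) (auto simp: idem_def)

text \<open>The inverse x of ef satisfies x = f x e by uniqueness of inverses; this forces x, and
  hence its inverse ef, to be idempotent.\<close>
lemma idem_mul[simp]: assumes e: "idem S e" and f: "idem S f" shows "idem S (e \<cdot> f)"
proof -
  have eC: "e \<in> C" and fC: "f \<in> C" using e f by (auto simp: idem_def)
  define x where "x = iv (e \<cdot> f)"
  have xC: "x \<in> C" using eC fC by (simp add: x_def)
  have x1: "e \<cdot> f \<cdot> x \<cdot> (e \<cdot> f) = e \<cdot> f" and x2: "x \<cdot> (e \<cdot> f) \<cdot> x = x"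
    using inv_is_inverse[of "e \<cdot> f"] eC fC by (auto simp: x_def)
  have "iv (e \<cdot> f) = f \<cdot> x \<cdot> e"
  proof (rule inv_unique)
    show "e \<cdot> f \<cdot> (f \<cdot> x \<cdot> e) \<cdot> (e \<cdot> f) = e \<cdot> f" using x1 e f eC fC xC by simp
    have "x \<cdot> (e \<cdot> (f \<cdot> (x \<cdot> e))) = (x \<cdot> (e \<cdot> f) \<cdot> x) \<cdot> e" using eC fC xC by simp
    then have "x \<cdot> (e \<cdot> (f \<cdot> (x \<cdot> e))) = x \<cdot> e" using x2 by simp
    then show "f \<cdot> x \<cdot> e \<cdot> (e \<cdot> f) \<cdot> (f \<cdot> x \<cdot> e) = f \<cdot> x \<cdot> e"
      using e f eC fC xC by simp
  qed (use eC fC xC in auto)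
  then have xx: "x = f \<cdot> x \<cdot> e" by (simp add: x_def)
  have "x \<cdot> x = f \<cdot> x \<cdot> e \<cdot> (f \<cdot> x \<cdot> e)" using xx by simp
  also have "\<dots> = f \<cdot> (x \<cdot> (e \<cdot> f) \<cdot> x) \<cdot> e" using eC fC xC by simp
  also have "\<dots> = x" using x2 xx by simp
  finally have xi: "idem S x" using xC by (simp add: idem_def)
  have "iv x = e \<cdot> f" using inv_unique[of x "e \<cdot> f"] x1 x2 xC eC fC by simp
  then show ?thesis using xi by simp
qed

lemma idem_comm: assumes "idem S e" "idem S f" shows "e \<cdot> f = f \<cdot> e"
proof -
  have eC: "e \<in> C" and fC: "f \<in> C" using assms by (auto simp: idem_def)
  have ef: "idem S (e \<cdot> f)" and fe: "idem S (f \<cdot> e)" using assms by simp_all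
  have "iv (e \<cdot> f) = f \<cdot> e"
  proof (rule inv_unique)
    have "e \<cdot> f \<cdot> (f \<cdot> e) \<cdot> (e \<cdot> f) = (e \<cdot> f) \<cdot> (e \<cdot> f)" using assms eC fC by (simp del: idem_mul)
    then show "e \<cdot> f \<cdot> (f \<cdot> e) \<cdot> (e \<cdot> f) = e \<cdot> f" using ef by (simp del: idem_mul)
    have "f \<cdot> e \<cdot> (e \<cdot> f) \<cdot> (f \<cdot> e) = (f \<cdot> e) \<cdot> (f \<cdot> e)" using assms eC fC by (simp del: idem_mul)
    then show "f \<cdot> e \<cdot> (e \<cdot> f) \<cdot> (f \<cdot> e) = f \<cdot> e" using fe by (simp del: idem_mul)
  qed (use eC fC in auto)
  then show ?thesis using inv_idem[OF ef] by argo
qed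

lemma inv_inv[simp]: "a \<in> C \<Longrightarrow> iv (iv a) = a"
  by (rule inv_unique) auto

lemma idem_mul_inv: "a \<in> C \<Longrightarrow> idem S (a \<cdot> iv a)"
  unfolding idem_def by (metis assoc mul_inv_mul inv_in mul_in)
lemma idem_inv_mul: "a \<in> C \<Longrightarrow> idem S (iv a \<cdot> a)"
  using idem_mul_inv[of "iv a"] by simp

lemma inv_mul[simp]: assumes "a \<in> C" "b \<in> C" shows "iv (a \<cdot> b) = iv b \<cdot> iv a"
proof (rule inv_unique)
  have c: "(iv a \<cdot> a) \<cdot> (b \<cdot> iv b) = (b \<cdot> iv b) \<cdot> (iv a \<cdot> a)"
    using idem_comm idem_mul_inv idem_inv_mul assms by blast
  have "a \<cdot> b \<cdot> (iv b \<cdot> iv a) \<cdot> (a \<cdot> b) = a \<cdot> ((b \<cdot> iv b) \<cdot> (iv a \<cdot> a)) \<cdot> b" using assms by simp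
  also have "\<dots> = a \<cdot> ((iv a \<cdot> a) \<cdot> (b \<cdot> iv b)) \<cdot> b" using c by simp
  also have "\<dots> = a \<cdot> b" using assms by simp
  finally show "a \<cdot> b \<cdot> (iv b \<cdot> iv a) \<cdot> (a \<cdot> b) = a \<cdot> b" .
  have "iv b \<cdot> iv a \<cdot> (a \<cdot> b) \<cdot> (iv b \<cdot> iv a) = iv b \<cdot> ((iv a \<cdot> a) \<cdot> (b \<cdot> iv b)) \<cdot> iv a" using assms by simp
  also have "\<dots> = iv b \<cdot> ((b \<cdot> iv b) \<cdot> (iv a \<cdot> a)) \<cdot> iv a" using c by simp
  also have "\<dots> = iv b \<cdot> iv a" using assms by simp
  finally show "iv b \<cdot> iv a \<cdot> (a \<cdot> b) \<cdot> (iv b \<cdot> iv a) = iv b \<cdot> iv a" .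
qed (use assms in auto)

lemma idem_conj[simp]: assumes "a \<in> C" "idem S e" shows "idem S (a \<cdot> (e \<cdot> iv a))"
proof -
  have eC: "e \<in> C" using assms idem_in by auto
  have "a \<cdot> (e \<cdot> iv a) \<cdot> (a \<cdot> (e \<cdot> iv a)) = a \<cdot> (e \<cdot> ((iv a \<cdot> a) \<cdot> e)) \<cdot> iv a" using assms eC by simp
  also have "\<dots> = a \<cdot> ((e \<cdot> (iv a \<cdot> a)) \<cdot> e) \<cdot> iv a" using assms eC by simp
  also have "\<dots> = a \<cdot> ((iv a \<cdot> a) \<cdot> (e \<cdot> e)) \<cdot> iv a" using assms eC idem_comm[OF assms(2) idem_inv_mul[OF assms(1)]]
    by (simp del: assoc) (simp)
  also have "\<dots> = a \<cdot> (e \<cdot> iv a)" using assms eC by simp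
  finally show ?thesis using assms eC by (simp add: idem_def)
qed

lemma idem_conj_inv[simp]: assumes "a \<in> C" "idem S e" shows "idem S (iv a \<cdot> (e \<cdot> a))"
  using idem_conj[of "iv a" e] assms by simp

lemma dom_eq: "dom S a = iv a \<cdot> a" by (simp add: dom_def)
lemma ran_eq: "ran S a = a \<cdot> iv a" by (simp add: ran_def)
lemma dom_idem[simp]: "a \<in> C \<Longrightarrow> idem S (dom S a)" by (simp add: dom_def idem_inv_mul)
lemma ran_idem[simp]: "a \<in> C \<Longrightarrow> idem S (ran S a)" by (simp add: ran_def idem_mul_inv)
lemma dom_in[simp]: "a \<in> C \<Longrightarrow> dom S a \<in> C" by (simp add: dom_def)
lemma ran_in[simp]: "a \<in> C \<Longrightarrow> ran S a \<in> C" by (simp add: ran_def)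
lemma mul_dom[simp]: "a \<in> C \<Longrightarrow> a \<cdot> dom S a = a" by (simp add: dom_def)
lemma ran_mul[simp]: "a \<in> C \<Longrightarrow> ran S a \<cdot> a = a" by (simp add: ran_def)
lemma ran_mul_left[simp]: "a \<in> C \<Longrightarrow> x \<in> C \<Longrightarrow> ran S a \<cdot> (a \<cdot> x) = a \<cdot> x" by (simp add: ran_def)
lemma dom_idem_eq[simp]: "idem S e \<Longrightarrow> dom S e = e" by (simp add: dom_def)
lemma ran_idem_eq[simp]: "idem S e \<Longrightarrow> ran S e = e" by (simp add: ran_def)
lemma dom_inv[simp]: "a \<in> C \<Longrightarrow> dom S (iv a) = ran S a" by (simp add: dom_def ran_def)

lemma dom_mul_idem: assumes "t \<in> C" "idem S e" shows "dom S (t \<cdot> e) = dom S t \<cdot> e"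
proof -
  have eC: "e \<in> C" using assms idem_in by auto
  have "dom S (t \<cdot> e) = e \<cdot> (iv t \<cdot> t \<cdot> e)" using assms eC by (simp add: dom_eq)
  also have "\<dots> = (iv t \<cdot> t) \<cdot> (e \<cdot> e)" using idem_comm[OF assms(2) idem_inv_mul[OF assms(1)]] assms eC
    by (metis assoc inv_in mul_in)
  finally show ?thesis using assms by (simp add: dom_eq)
qed

lemma leqD: "leq S s t \<Longrightarrow> s \<in> C \<and> t \<in> C \<and> s = t \<cdot> dom S s" by (simp add: leq_def)
lemma leq_in_left: "leq S s t \<Longrightarrow> s \<in> C" by (simp add: leq_def)
lemma leq_in_right: "leq S s t \<Longrightarrow> t \<in> C" by (simp add: leq_def)

lemma mul_idem_leq: assumes "t \<in> C" "idem S e" shows "leq S (t \<cdot> e) t"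
proof -
  have eC: "e \<in> C" using assms idem_in by auto
  have "t \<cdot> dom S (t \<cdot> e) = t \<cdot> (dom S t \<cdot> e)" using dom_mul_idem assms by simp
  also have "\<dots> = t \<cdot> e" using assms eC by (simp add: dom_eq)
  finally show ?thesis using assms eC by (simp add: leq_def)
qed

lemma mul_idem_leqI: "t \<in> C \<Longrightarrow> idem S e \<Longrightarrow> s = t \<cdot> e \<Longrightarrow> leq S s t" using mul_idem_leq by simp

lemma idem_mul_conj: assumes "v \<in> C" "idem S g" shows "g \<cdot> v = v \<cdot> (iv v \<cdot> (g \<cdot> v))"
proof -
  have gC: "g \<in> C" using assms idem_in by auto
  have "v \<cdot> (iv v \<cdot> (g \<cdot> v)) = (v \<cdot> iv v) \<cdot> g \<cdot> v" using assms gC by simp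
  also have "\<dots> = g \<cdot> (v \<cdot> iv v) \<cdot> v" using idem_comm[OF idem_mul_inv[OF assms(1)] assms(2)] by simp
  also have "\<dots> = g \<cdot> v" using assms gC by simp
  finally show ?thesis by simp
qed

lemma idem_mul_leq: assumes "t \<in> C" "idem S e" shows "leq S (e \<cdot> t) t"
  using idem_mul_conj[OF assms(1,2)] mul_idem_leq[of t "iv t \<cdot> (e \<cdot> t)"] assms by simp

lemma idem_mul_leqI: "t \<in> C \<Longrightarrow> idem S e \<Longrightarrow> s = e \<cdot> t \<Longrightarrow> leq S s t" using idem_mul_leq by simp

lemma leq_refl[simp]: "a \<in> C \<Longrightarrow> leq S a a" by (simp add: leq_def)

lemma leq_ran: assumes "leq S s t" shows "s = ran S s \<cdot> t"
proof -
  have C: "s \<in> C" "t \<in> C" and s: "s = t \<cdot> dom S s" using assms leq_in_left leq_in_right leqD by blast+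
  have "ran S s \<cdot> t = s \<cdot> iv s \<cdot> t" by (simp add: ran_eq)
  also have "\<dots> = t \<cdot> dom S s \<cdot> (dom S s \<cdot> iv t) \<cdot> t" using C s by (metis dom_idem inv_idem inv_mul dom_in)
  also have "\<dots> = t \<cdot> (dom S s \<cdot> (iv t \<cdot> t))" using C by simp
  also have "\<dots> = t \<cdot> ((iv t \<cdot> t) \<cdot> dom S s)" using C idem_comm[of "dom S s" "iv t \<cdot> t"] idem_inv_mul by simp
  also have "\<dots> = t \<cdot> dom S s" using C by simp
  also have "\<dots> = s" using s by simp
  finally show ?thesis by simp
qed

lemma idem_leq: assumes "idem S e" "idem S f" shows "leq S e f \<longleftrightarrow> e = e \<cdot> f"
  using assms idem_comm[OF assms] by (auto simp: leq_def idem_in)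

lemma idem_leq': assumes "idem S e" "idem S f" shows "leq S e f \<longleftrightarrow> e = f \<cdot> e"
  using assms idem_comm[OF assms] by (auto simp: leq_def idem_in)

lemma leq_trans: assumes "leq S a b" "leq S b c" shows "leq S a c"
proof -
  have C: "a \<in> C" "b \<in> C" "c \<in> C" using assms leq_in_left leq_in_right leqD by blast+
  have "a = b \<cdot> dom S a" "b = c \<cdot> dom S b" using assms leq_in_left leq_in_right leqD by blast+
  then have "a = c \<cdot> (dom S b \<cdot> dom S a)" using C by (metis assoc dom_in)
  then show ?thesis using C by (intro mul_idem_leqI[of c "dom S b \<cdot> dom S a"]) auto
qed

lemma dom_mono: assumes "leq S s t" shows "leq S (dom S s) (dom S t)"
proof -
  have C: "s \<in> C" "t \<in> C" and s: "s = t \<cdot> dom S s" using assms leq_in_left leq_in_right leqD by blast+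
  have "dom S s = dom S t \<cdot> dom S s" using dom_mul_idem[of t "dom S s"] s C by simp
  then show ?thesis using idem_leq' C by simp
qed

lemma leq_inv: assumes "leq S s t" shows "leq S (iv s) (iv t)"
proof -
  have C: "s \<in> C" "t \<in> C" and s: "s = t \<cdot> dom S s" using assms leq_in_left leq_in_right leqD by blast+
  have "iv s = dom S s \<cdot> iv t" using C s by (metis dom_idem inv_idem inv_mul dom_in)
  then show ?thesis using C by (intro idem_mul_leqI) auto
qed

lemma leq_antisym: assumes "leq S a b" "leq S b a" shows "a = b"
proof -
  have C: "a \<in> C" "b \<in> C" using assms leq_in_left leq_in_right leqD by blast+
  have d1: "dom S a = dom S a \<cdot> dom S b" using dom_mono[OF assms(1)] idem_leq C by simp
  have d2: "dom S b = dom S b \<cdot> dom S a" using dom_mono[OF assms(2)] idem_leq C by simp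
  have "dom S a \<cdot> dom S b = dom S b \<cdot> dom S a" using idem_comm[OF dom_idem[OF C(1)] dom_idem[OF C(2)]] .
  then have "dom S a = dom S b" using d1 d2 by argo
  then show ?thesis using leqD[OF assms(1)] mul_dom[OF C(2)] by argo
qed

lemma zer_leq[simp]: "t \<in> C \<Longrightarrow> leq S z t"
  by (rule mul_idem_leqI[of t z]) auto

lemma leq_zer: "leq S s z \<Longrightarrow> s = z"
  using leq_antisym zer_leq leq_in_left by blast

lemma leq_mul_mono: assumes "leq S s t" "leq S u v" shows "leq S (s \<cdot> u) (t \<cdot> v)"
proof -
  have C: "s \<in> C" "t \<in> C" "u \<in> C" "v \<in> C" using assms leq_in_left leq_in_right leqD by blast+
  have s: "s = t \<cdot> dom S s" using assms leq_in_left leq_in_right leqD by blast+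
  have u: "u = ran S u \<cdot> v" using leq_ran assms by simp
  define g where "g = dom S s \<cdot> ran S u"
  have g: "idem S g" using C by (simp add: g_def)
  have gC: "g \<in> C" using g idem_in by auto
  have "s \<cdot> u = t \<cdot> (g \<cdot> v)" using C s u by (metis assoc dom_in g_def ran_in)
  also have "\<dots> = t \<cdot> v \<cdot> (iv v \<cdot> (g \<cdot> v))" using idem_mul_conj[OF C(4) g] C gC by simp
  finally show ?thesis using C g by (intro mul_idem_leqI) auto
qed

lemma leq_mul_left: "leq S u v \<Longrightarrow> s \<in> C \<Longrightarrow> leq S (s \<cdot> u) (s \<cdot> v)"
  using leq_mul_mono[of s s u v] by simp

lemma leq_iff_dom_leq: assumes "leq S x m" "leq S y m"
  shows "leq S x y \<longleftrightarrow> leq S (dom S x) (dom S y)"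
proof
  assume "leq S x y" then show "leq S (dom S x) (dom S y)" by (rule dom_mono)
next
  assume d: "leq S (dom S x) (dom S y)"
  have C: "x \<in> C" "y \<in> C" "m \<in> C" using assms leq_in_left leq_in_right leqD by blast+
  have x: "x = m \<cdot> dom S x" and y: "y = m \<cdot> dom S y" using assms leq_in_left leq_in_right leqD by blast+
  have "dom S x = dom S y \<cdot> dom S x" using d idem_leq' C by simp
  then have "x = y \<cdot> dom S x" using x y C by (metis assoc dom_in)
  then show "leq S x y" using C by (intro mul_idem_leqI) auto
qed

lemma idem_leq_mul1: "idem S e \<Longrightarrow> idem S f \<Longrightarrow> leq S (e \<cdot> f) e"
  using idem_leq idem_comm by (metis idem_mul idem_mul_self_left idem_in)
lemma idem_leq_mul2: "idem S e \<Longrightarrow> idem S f \<Longrightarrow> leq S (e \<cdot> f) f"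
  using idem_leq by (simp add: idem_in)

lemma leq_idem_glb: "idem S x \<Longrightarrow> idem S e \<Longrightarrow> idem S f \<Longrightarrow> leq S x e \<Longrightarrow> leq S x f \<Longrightarrow> leq S x (e \<cdot> f)"
  using idem_leq by (metis assoc idem_in idem_mul)

lemma compat_sym: assumes "compat S a b" shows "compat S b a"
proof -
  have C: "a \<in> C" "b \<in> C" and i1: "idem S (iv a \<cdot> b)" and i2: "idem S (a \<cdot> iv b)"
    using assms unfolding compat_def by blast+
  have "iv b \<cdot> a = iv (iv a \<cdot> b)" using C by simp
  also have "\<dots> = iv a \<cdot> b" using inv_idem[OF i1] .
  finally have 1: "iv b \<cdot> a = iv a \<cdot> b" .
  have "b \<cdot> iv a = iv (a \<cdot> iv b)" using C by simp
  also have "\<dots> = a \<cdot> iv b" using inv_idem[OF i2] .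
  finally have 2: "b \<cdot> iv a = a \<cdot> iv b" .
  show ?thesis unfolding compat_def using C i1 i2 1 2 by simp
qed

lemma compat_refl[simp]: "a \<in> C \<Longrightarrow> compat S a a"
  unfolding compat_def using idem_mul_inv idem_inv_mul by simp

lemma compat_in: "compat S a b \<Longrightarrow> a \<in> C \<and> b \<in> C" by (simp add: compat_def)

lemma compat_down: assumes "leq S x a" "compat S a b" shows "compat S x b"
proof -
  have C: "x \<in> C" "a \<in> C" "b \<in> C" using assms leq_in_left compat_in by blast+
  have x1: "x = a \<cdot> dom S x" using assms leqD by blast
  have x2: "x = ran S x \<cdot> a" using assms leq_ran by blast
  have "iv x \<cdot> b = iv (a \<cdot> dom S x) \<cdot> b" using x1 by simp
  also have "\<dots> = dom S x \<cdot> (iv a \<cdot> b)" using C by simp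
  finally have 1: "iv x \<cdot> b = dom S x \<cdot> (iv a \<cdot> b)" .
  have "x \<cdot> iv b = ran S x \<cdot> a \<cdot> iv b" using x2 by simp
  also have "\<dots> = ran S x \<cdot> (a \<cdot> iv b)" using C by simp
  finally have 2: "x \<cdot> iv b = ran S x \<cdot> (a \<cdot> iv b)" .
  show ?thesis using assms C 1 2 unfolding compat_def by simp
qed

lemma compat_below: "leq S x a \<Longrightarrow> leq S y a \<Longrightarrow> compat S x y"
  using compat_down[of x a y] compat_sym compat_down[of y a a] compat_refl[of a] leq_in_right by blast

lemma compat_leq_compat: "compat S x y \<Longrightarrow> leq S c x \<Longrightarrow> leq S c' y \<Longrightarrow> compat S c c'"
  using compat_down compat_sym by blast

lemma compat_orthogonal: "a \<in> C \<Longrightarrow> b \<in> C \<Longrightarrow> iv a \<cdot> b = z \<Longrightarrow> a \<cdot> iv b = z \<Longrightarrow> compat S a b"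
  unfolding compat_def by simp

lemma compat_inv: "compat S a b \<Longrightarrow> compat S (iv a) (iv b)"
  unfolding compat_def by simp

lemma compatD1: "compat S a b \<Longrightarrow> idem S (iv a \<cdot> b)" unfolding compat_def by blast
lemma compatD2: "compat S a b \<Longrightarrow> idem S (a \<cdot> iv b)" unfolding compat_def by blast

lemma mul_dom_left[simp]: "a \<in> C \<Longrightarrow> w \<in> C \<Longrightarrow> a \<cdot> (dom S a \<cdot> w) = a \<cdot> w"
  by (simp add: dom_eq)

lemma compat_dom: assumes "compat S x y" shows "x \<cdot> dom S y = y \<cdot> dom S x"
proof -
  have C: "x \<in> C" "y \<in> C" using assms compat_in by auto
  have f: "idem S (x \<cdot> iv y)" using assms unfolding compat_def by blast
  have fi: "y \<cdot> iv x = x \<cdot> iv y" using inv_idem[OF f] C by simp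
  have cm: "dom S x \<cdot> dom S y = dom S y \<cdot> dom S x" using idem_comm[OF dom_idem[OF C(1)] dom_idem[OF C(2)]] .
  have "x \<cdot> dom S y = x \<cdot> (dom S x \<cdot> dom S y)" using C by simp
  also have "\<dots> = x \<cdot> (dom S y \<cdot> dom S x)" using cm by simp
  also have "\<dots> = (x \<cdot> iv y) \<cdot> (y \<cdot> iv x) \<cdot> x" using C by (simp add: dom_eq)
  also have "\<dots> = (x \<cdot> iv y) \<cdot> (x \<cdot> iv y) \<cdot> x" using fi by simp
  also have "\<dots> = (x \<cdot> iv y) \<cdot> x" using f by simp
  also have "\<dots> = (y \<cdot> iv x) \<cdot> x" using fi by simp
  also have "\<dots> = y \<cdot> dom S x" using C by (simp add: dom_eq)
  finally show ?thesis .
qed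

lemma compat_mul_left: assumes "compat S a b" "s \<in> C" shows "compat S (s \<cdot> a) (s \<cdot> b)"
proof -
  have C: "a \<in> C" "b \<in> C" using assms compat_in by auto
  have "leq S (dom S s \<cdot> a) a" using idem_mul_leq[of a "dom S s"] C assms by simp
  then have "compat S (dom S s \<cdot> a) b" using compat_down assms(1) by blast
  then have i: "idem S (iv (dom S s \<cdot> a) \<cdot> b)" unfolding compat_def by blast
  have "iv (dom S s \<cdot> a) \<cdot> b = iv (s \<cdot> a) \<cdot> (s \<cdot> b)" using C assms by (simp add: dom_eq)
  then have 1: "idem S (iv (s \<cdot> a) \<cdot> (s \<cdot> b))" using i by simp
  have "idem S (a \<cdot> iv b)" using assms unfolding compat_def by blast
  then have "idem S (s \<cdot> ((a \<cdot> iv b) \<cdot> iv s))" using assms C idem_conj by blast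
  moreover have "s \<cdot> ((a \<cdot> iv b) \<cdot> iv s) = (s \<cdot> a) \<cdot> iv (s \<cdot> b)" using C assms by simp
  ultimately have 2: "idem S ((s \<cdot> a) \<cdot> iv (s \<cdot> b))" by simp
  show ?thesis using 1 2 C assms unfolding compat_def by simp
qed

lemma compat_mul_right: assumes "compat S a b" "s \<in> C" shows "compat S (a \<cdot> s) (b \<cdot> s)"
proof -
  have C: "a \<in> C" "b \<in> C" using assms compat_in by auto
  have "compat S (iv s \<cdot> iv a) (iv s \<cdot> iv b)" using compat_mul_left[OF compat_inv[OF assms(1)]] assms by simp
  then have "compat S (iv (iv s \<cdot> iv a)) (iv (iv s \<cdot> iv b))" by (rule compat_inv)
  then show ?thesis using C assms by simp
qed

lemma idem_compat: "idem S e \<Longrightarrow> idem S f \<Longrightarrow> compat S e f"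
  unfolding compat_def by (simp add: idem_in)

lemma lub_unique: "is_lub_in S X A x \<Longrightarrow> is_lub_in S X A y \<Longrightarrow> x = y"
  unfolding is_lub_in_def using leq_antisym by blast
lemma glb_unique: "is_glb_in S X A x \<Longrightarrow> is_glb_in S X A y \<Longrightarrow> x = y"
  unfolding is_glb_in_def using leq_antisym by blast

lemma join_set_eq: "is_lub_in S C A x \<Longrightarrow> join_set S A = x"
  unfolding join_set_def using lub_unique by blast
lemma join_eq: "is_lub_in S C {a, b} x \<Longrightarrow> join S a b = x"
  unfolding join_def using join_set_eq by blast
lemma Ejoin_eq: "is_lub_in S (Idem S) {a, b} x \<Longrightarrow> Ejoin S a b = x"
  unfolding Ejoin_def using lub_unique by blast

lemma glb_idem: "idem S e \<Longrightarrow> idem S f \<Longrightarrow> is_glb_in S (Idem S) {e, f} (e \<cdot> f)"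
  unfolding is_glb_in_def Idem_def using idem_leq_mul1 idem_leq_mul2 leq_idem_glb by auto

lemma Emeet_eq[simp]: "idem S e \<Longrightarrow> idem S f \<Longrightarrow> Emeet S e f = e \<cdot> f"
  unfolding Emeet_def using glb_idem glb_unique by blast

lemma lub_empty: "is_lub_in S C {} z"
  unfolding is_lub_in_def by simp

lemma lubD1: "is_lub_in S X A x \<Longrightarrow> x \<in> X" unfolding is_lub_in_def by blast
lemma lubD2: "is_lub_in S X A x \<Longrightarrow> a \<in> A \<Longrightarrow> leq S a x" unfolding is_lub_in_def by blast
lemma lubD3: "is_lub_in S X A x \<Longrightarrow> y \<in> X \<Longrightarrow> (\<And>a. a \<in> A \<Longrightarrow> leq S a y) \<Longrightarrow> leq S x y"
  unfolding is_lub_in_def by blast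
lemma lubI: "x \<in> X \<Longrightarrow> (\<And>a. a \<in> A \<Longrightarrow> leq S a x) \<Longrightarrow> (\<And>y. y \<in> X \<Longrightarrow> (\<And>a. a \<in> A \<Longrightarrow> leq S a y) \<Longrightarrow> leq S x y) \<Longrightarrow> is_lub_in S X A x"
  unfolding is_lub_in_def by blast

lemma lub_insert: assumes "is_lub_in S X {p, q} r" "is_lub_in S X B q" shows "is_lub_in S X (insert p B) r"
proof (rule lubI)
  show "r \<in> X" using lubD1[OF assms(1)] .
  fix a assume "a \<in> insert p B"
  then show "leq S a r"
  proof
    assume "a = p" then show ?thesis using lubD2[OF assms(1)] by blast
  next
    assume "a \<in> B" then have "leq S a q" using lubD2[OF assms(2)] by blast
    moreover have "leq S q r" using lubD2[OF assms(1)] by blast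
    ultimately show ?thesis using leq_trans by blast
  qed
next
  fix y assume y: "y \<in> X" and ub: "\<And>a. a \<in> insert p B \<Longrightarrow> leq S a y"
  have "leq S q y" using lubD3[OF assms(2) y] ub by blast
  moreover have "leq S p y" using ub by blast
  ultimately show "leq S r y" using lubD3[OF assms(1) y] by blast
qed

lemma dom_mul_le: assumes "s \<in> C" "a \<in> C" shows "leq S (dom S (s \<cdot> a)) (dom S a)"
proof -
  have "dom S (s \<cdot> a) = iv a \<cdot> (dom S s \<cdot> a)" using assms by (simp add: dom_eq)
  moreover have "idem S (iv a \<cdot> (dom S s \<cdot> a))" using assms by simp
  moreover have "iv a \<cdot> (dom S s \<cdot> a) \<cdot> dom S a = iv a \<cdot> (dom S s \<cdot> a)" using assms by (simp add: dom_eq)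
  ultimately show ?thesis using idem_leq assms by simp
qed
end

lemma hom_in: "hom S T f \<Longrightarrow> a \<in> car S \<Longrightarrow> f a \<in> car T" by (simp add: hom_def)
lemma hom_mul: "hom S T f \<Longrightarrow> a \<in> car S \<Longrightarrow> b \<in> car S \<Longrightarrow> f (mul S a b) = mul T (f a) (f b)" by (simp add: hom_def)
lemma hom_zer: "hom S T f \<Longrightarrow> f (zer S) = zer T" by (simp add: hom_def)
lemma hom_comp: "hom S T f \<Longrightarrow> hom T U g \<Longrightarrow> hom S U (g \<circ> f)" by (simp add: hom_def)

lemma hom_inv: assumes "inv_semigroup S" "inv_semigroup T" "hom S T f" "a \<in> car S" shows "f (inv S a) = inv T (f a)"
proof -
  interpret s: inv_semigroup S by fact
  interpret t: inv_semigroup T by fact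
  have iC: "inv S a \<in> car S" using assms(4) by simp
  have aiC: "mul S a (inv S a) \<in> car S" "mul S (inv S a) a \<in> car S" using assms(4) by simp_all
  have a: "f a \<in> car T" "f (inv S a) \<in> car T" using hom_in[OF assms(3)] assms(4) iC by blast+
  have m1: "f (mul S (mul S a (inv S a)) a) = mul T (f (mul S a (inv S a))) (f a)" using hom_mul[OF assms(3) aiC(1) assms(4)] .
  have m2: "f (mul S a (inv S a)) = mul T (f a) (f (inv S a))" using hom_mul[OF assms(3) assms(4) iC] .
  have m3: "f (mul S (mul S (inv S a) a) (inv S a)) = mul T (f (mul S (inv S a) a)) (f (inv S a))" using hom_mul[OF assms(3) aiC(2) iC] .
  have m4: "f (mul S (inv S a) a) = mul T (f (inv S a)) (f a)" using hom_mul[OF assms(3) iC assms(4)] .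
  have e1: "mul S (mul S a (inv S a)) a = a" using s.inv_is_inverse[OF assms(4)] by blast
  have e2: "mul S (mul S (inv S a) a) (inv S a) = inv S a" using s.inv_is_inverse[OF assms(4)] by blast
  have 1: "mul T (mul T (f a) (f (inv S a))) (f a) = f a" using m1 m2 e1 by simp
  have 2: "mul T (mul T (f (inv S a)) (f a)) (f (inv S a)) = f (inv S a)" using m3 m4 e2 by simp
  show ?thesis using t.inv_unique[OF a 1 2] by simp
qed

lemma hom_dom: "inv_semigroup S \<Longrightarrow> inv_semigroup T \<Longrightarrow> hom S T f \<Longrightarrow> a \<in> car S \<Longrightarrow> f (dom S a) = dom T (f a)"
  by (simp add: dom_def hom_mul hom_inv inv_semigroup.inv_in)
lemma hom_idem: "hom S T f \<Longrightarrow> idem S e \<Longrightarrow> idem T (f e)"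
  unfolding idem_def using hom_in hom_mul by metis
lemma hom_leq: assumes "inv_semigroup S" "inv_semigroup T" "hom S T f" "leq S a b" shows "leq T (f a) (f b)"
proof -
  have C: "a \<in> car S" "b \<in> car S" and e: "a = mul S b (dom S a)" using assms(4) unfolding leq_def by blast+
  have "f a = mul T (f b) (f (dom S a))" using hom_mul[OF assms(3) C(2) inv_semigroup.dom_in[OF assms(1) C(1)]] e by simp
  then have "f a = mul T (f b) (dom T (f a))" using hom_dom[OF assms(1-3) C(1)] by simp
  then show ?thesis unfolding leq_def using hom_in[OF assms(3)] C by blast
qed
lemma hom_compat: assumes "inv_semigroup S" "inv_semigroup T" "hom S T f" "compat S a b" shows "compat T (f a) (f b)"
proof -
  have C: "a \<in> car S" "b \<in> car S" and i: "idem S (mul S (inv S a) b)" "idem S (mul S a (inv S b))"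
    using assms(4) unfolding compat_def by blast+
  have "idem T (f (mul S (inv S a) b))" "idem T (f (mul S a (inv S b)))" using hom_idem[OF assms(3)] i by blast+
  then show ?thesis unfolding compat_def using hom_mul[OF assms(3)] hom_inv[OF assms(1-3)] hom_in[OF assms(3)] C inv_semigroup.inv_in[OF assms(1)]
    by simp
qed

section \<open>Distributive and Boolean inverse semigroups\<close>

locale dist_inv_semigroup = inv_semigroup +
  assumes distributive: "distributive_isg S"
begin

lemma join_lub: assumes "compat S a b" shows "is_lub_in S C {a, b} (join S a b)"
proof -
  have C: "a \<in> C" "b \<in> C" using assms compat_in by blast+
  obtain x where "is_lub_in S C {a, b} x" using distributive assms C unfolding distributive_isg_def by blast
  then show ?thesis using join_eq by simp
qed

lemma join_in[simp]: "compat S a b \<Longrightarrow> join S a b \<in> C" using join_lub lubD1 by blast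
lemma join_ub1: "compat S a b \<Longrightarrow> leq S a (join S a b)" using join_lub lubD2 by blast
lemma join_ub2: "compat S a b \<Longrightarrow> leq S b (join S a b)" using join_lub lubD2 by blast
lemma join_least: "compat S a b \<Longrightarrow> leq S a y \<Longrightarrow> leq S b y \<Longrightarrow> leq S (join S a b) y"
  using join_lub[of a b] lubD3[of C "{a,b}" "join S a b" y] leq_in_right by blast

lemma join_comm: "join S a b = join S b a" unfolding join_def by (simp add: insert_commute)

lemma mul_join_distrib: "compat S a b \<Longrightarrow> s \<in> C \<Longrightarrow> s \<cdot> join S a b = join S (s \<cdot> a) (s \<cdot> b)"
  using distributive compat_in unfolding distributive_isg_def by blast
lemma join_mul_distrib: "compat S a b \<Longrightarrow> s \<in> C \<Longrightarrow> join S a b \<cdot> s = join S (a \<cdot> s) (b \<cdot> s)"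
  using distributive compat_in unfolding distributive_isg_def by blast

lemma compat_zer[simp]: "a \<in> C \<Longrightarrow> compat S a z" unfolding compat_def by simp

lemma join_zer[simp]: "a \<in> C \<Longrightarrow> join S a z = a"
  by (rule join_eq, rule lubI) auto
lemma join_zer'[simp]: "a \<in> C \<Longrightarrow> join S z a = a"
  using join_zer join_comm by metis

lemma leq_eq_mul_dom: "leq S a m \<Longrightarrow> a = m \<cdot> dom S a" using leqD by blast

lemma join_idem: assumes "idem S e" "idem S f" shows "idem S (join S e f)"
proof -
  have c: "compat S e f" using idem_compat assms by blast
  define x where "x = join S e f"
  have xC: "x \<in> C" using c by (simp add: x_def)
  have "leq S e x" "leq S f x" using join_ub1 join_ub2 c x_def by blast+
  then have ex: "x \<cdot> e = e" "x \<cdot> f = f" using leq_eq_mul_dom assms by (metis dom_idem_eq)+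
  have "x \<cdot> x = join S (x \<cdot> e) (x \<cdot> f)" using mul_join_distrib[OF c xC] x_def by simp
  also have "\<dots> = x" using ex x_def by simp
  finally show ?thesis using xC x_def by (simp add: idem_def)
qed

lemma lub_Idem: assumes "idem S e" "idem S f" shows "is_lub_in S (Idem S) {e, f} (join S e f)"
proof (rule lubI)
  have c: "compat S e f" using idem_compat assms by blast
  show "join S e f \<in> Idem S" using join_idem assms by (simp add: Idem_def)
  show "\<And>a. a \<in> {e, f} \<Longrightarrow> leq S a (join S e f)" using join_ub1 join_ub2 c by blast
  show "\<And>y. y \<in> Idem S \<Longrightarrow> (\<And>a. a \<in> {e, f} \<Longrightarrow> leq S a y) \<Longrightarrow> leq S (join S e f) y"
    using join_least c by blast
qed

lemma Ejoin_join: "idem S e \<Longrightarrow> idem S f \<Longrightarrow> Ejoin S e f = join S e f"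
  using Ejoin_eq lub_Idem by blast

lemma dom_join: assumes "compat S a b" shows "dom S (join S a b) = join S (dom S a) (dom S b)"
proof -
  have C: "a \<in> C" "b \<in> C" using assms compat_in by blast+
  define m where "m = join S a b"
  define e where "e = join S (dom S a) (dom S b)"
  have mC: "m \<in> C" using assms m_def by simp
  have ce: "compat S (dom S a) (dom S b)" using idem_compat C by simp
  have e: "idem S e" using join_idem C e_def by simp
  have am: "leq S a m" "leq S b m" using join_ub1 join_ub2 assms m_def by blast+
  have "m \<cdot> e = join S (m \<cdot> dom S a) (m \<cdot> dom S b)" using mul_join_distrib[OF ce mC] e_def by simp
  also have "\<dots> = m" using leq_eq_mul_dom[OF am(1)] leq_eq_mul_dom[OF am(2)] m_def by simp
  finally have me: "m \<cdot> e = m" .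
  have "dom S m = dom S m \<cdot> e" using dom_mul_idem[OF mC e] me by simp
  then have 1: "leq S (dom S m) e" using idem_leq e mC by simp
  have "leq S (dom S a) (dom S m)" "leq S (dom S b) (dom S m)" using dom_mono am by blast+
  then have 2: "leq S e (dom S m)" using join_least ce e_def by blast
  show ?thesis using leq_antisym[OF 1 2] m_def e_def by simp
qed

lemma join_mono: assumes "compat S a b" "compat S c d" "leq S a c" "leq S b d"
  shows "leq S (join S a b) (join S c d)"
proof -
  have "leq S c (join S c d)" "leq S d (join S c d)" using join_ub1 join_ub2 assms by blast+
  then show ?thesis using join_least assms leq_trans by blast
qed

lemma inv_join: assumes "compat S a b" shows "iv (join S a b) = join S (iv a) (iv b)"
proof -
  have C: "a \<in> C" "b \<in> C" using assms compat_in by blast+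
  have c': "compat S (iv a) (iv b)" using compat_inv assms by blast
  have "is_lub_in S C {iv a, iv b} (iv (join S a b))"
  proof (rule lubI)
    show "iv (join S a b) \<in> C" using assms by simp
    show "\<And>x. x \<in> {iv a, iv b} \<Longrightarrow> leq S x (iv (join S a b))"
      using leq_inv join_ub1 join_ub2 assms by blast
    fix y assume y: "y \<in> C" and ub: "\<And>x. x \<in> {iv a, iv b} \<Longrightarrow> leq S x y"
    have "leq S a (iv y)" "leq S b (iv y)" using leq_inv ub C y by (metis insertI1 insertI2 singletonI inv_inv)+
    then have "leq S (join S a b) (iv y)" using join_least assms by blast
    then show "leq S (iv (join S a b)) y" using leq_inv y by fastforce
  qed
  then show ?thesis using join_eq by simp
qed

lemma compat_join: assumes "compat S a x" "compat S a y" "compat S x y" shows "compat S a (join S x y)"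
proof -
  have C: "a \<in> C" "x \<in> C" "y \<in> C" using assms compat_in by blast+
  have i1: "idem S (iv a \<cdot> x)" "idem S (iv a \<cdot> y)" using assms compatD1 by blast+
  have i2: "idem S (a \<cdot> iv x)" "idem S (a \<cdot> iv y)" using assms compatD2 by blast+
  have "iv a \<cdot> join S x y = join S (iv a \<cdot> x) (iv a \<cdot> y)" using mul_join_distrib assms(3) C by simp
  then have 1: "idem S (iv a \<cdot> join S x y)" using join_idem i1 by simp
  have "a \<cdot> iv (join S x y) = join S (a \<cdot> iv x) (a \<cdot> iv y)" using mul_join_distrib compat_inv[OF assms(3)] C inv_join assms(3) by simp
  then have 2: "idem S (a \<cdot> iv (join S x y))" using join_idem i2 by simp
  show ?thesis unfolding compat_def using 1 2 C assms(3) by simp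
qed

lemma finite_lub_below: assumes "finite A" "A \<subseteq> down S m" "m \<in> C" shows "\<exists>j. is_lub_in S C A j \<and> leq S j m"
  using assms
proof (induction A rule: finite_induct)
  case empty then show ?case using lub_empty zer_leq by blast
next
  case (insert x A)
  then obtain j where j: "is_lub_in S C A j" "leq S j m" by (auto)
  have xm: "leq S x m" using insert.prems by (simp add: down_def)
  have c: "compat S x j" using compat_below[OF xm j(2)] .
  have "is_lub_in S C (insert x A) (join S x j)" using lub_insert[OF join_lub[OF c] j(1)] .
  moreover have "leq S (join S x j) m" using join_least[OF c xm j(2)] .
  ultimately show ?case by blast
qed

lemma Emeet_Ejoin_distrib: assumes "idem S e" "idem S f" "idem S g"
  shows "Emeet S e (Ejoin S f g) = Ejoin S (Emeet S e f) (Emeet S e g)"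
proof -
  have c: "compat S f g" using idem_compat assms by blast
  have "Emeet S e (Ejoin S f g) = e \<cdot> join S f g" using assms Ejoin_join join_idem by simp
  also have "\<dots> = join S (e \<cdot> f) (e \<cdot> g)" using mul_join_distrib c assms idem_in by blast
  also have "\<dots> = Ejoin S (Emeet S e f) (Emeet S e g)" using assms Ejoin_join by simp
  finally show ?thesis .
qed

lemma idem_below_join: assumes "idem S x" "idem S e" "idem S f" "leq S x (join S e f)"
  shows "x = join S (x \<cdot> e) (x \<cdot> f)"
proof -
  have c: "compat S e f" using idem_compat assms by blast
  have "x = x \<cdot> join S e f" using idem_leq assms join_idem by blast
  also have "\<dots> = join S (x \<cdot> e) (x \<cdot> f)" using mul_join_distrib c assms idem_in by blast
  finally show ?thesis .
qed

lemma gen_boolean_idemI: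
  assumes compl: "\<And>e f. idem S e \<Longrightarrow> idem S f \<Longrightarrow> leq S f e
      \<Longrightarrow> \<exists>g. idem S g \<and> leq S g e \<and> f \<cdot> g = z \<and> join S f g = e"
  shows "gen_boolean_idem S"
  unfolding gen_boolean_idem_def
proof (intro conjI ballI impI)
  fix e f assume "e \<in> Idem S" "f \<in> Idem S"
  then have ef: "idem S e" "idem S f" by (simp_all add: Idem_def)
  show "\<exists>x. is_lub_in S (Idem S) {e, f} x" using lub_Idem[OF ef] by blast
  show "\<exists>x. is_glb_in S (Idem S) {e, f} x" using glb_idem[OF ef] by blast
  fix g assume "g \<in> Idem S"
  then show "Emeet S e (Ejoin S f g) = Ejoin S (Emeet S e f) (Emeet S e g)"
    using Emeet_Ejoin_distrib ef by (simp add: Idem_def)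
next
  show "z \<in> Idem S" by (simp add: Idem_def)
next
  fix e assume "e \<in> Idem S"
  then show "leq S z e" by (simp add: Idem_def idem_in)
next
  fix e f assume "e \<in> Idem S" and f: "f \<in> Idem S" and "leq S f e"
  then obtain g where "idem S g" "leq S g e" "f \<cdot> g = z" "join S f g = e"
    using compl by (auto simp: Idem_def)
  then show "\<exists>g\<in>Idem S. leq S g e \<and> Emeet S f g = z \<and> Ejoin S f g = e"
    using f Ejoin_join by (auto simp: Idem_def)
qed

end

lemma bmorphism_join_set:
  assumes S: "dist_inv_semigroup S" and T: "dist_inv_semigroup T" and f: "bmorphism S T f"
    and A: "finite A" "A \<subseteq> down S m" "m \<in> car S"
  shows "is_lub_in T (car T) (f ` A) (f (join_set S A))"
proof -
  interpret s: dist_inv_semigroup S by fact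
  interpret t: dist_inv_semigroup T by fact
  have hom: "hom S T f" using f bmorphism_def by blast
  show ?thesis
    using A
  proof (induction A rule: finite_induct)
    case empty
    have "join_set S {} = zer S" using s.join_set_eq s.lub_empty by blast
    then show ?case using hom_zer[OF hom] t.lub_empty by simp
  next
    case (insert x A)
    obtain j where j: "is_lub_in S (car S) A j" "leq S j m"
      using s.finite_lub_below[OF insert.hyps(1)] insert.prems by blast
    have xm: "leq S x m" using insert.prems by (simp add: down_def)
    have c: "compat S x j" using s.compat_below[OF xm j(2)] .
    have "is_lub_in S (car S) (insert x A) (join S x j)" using s.lub_insert[OF s.join_lub[OF c] j(1)] .
    then have js: "join_set S (insert x A) = join S x j" using s.join_set_eq by blast
    have fj: "f (join S x j) = join T (f x) (f j)" using f c s.compat_in unfolding bmorphism_def by blast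
    have "is_lub_in T (car T) {f x, f j} (f (join S x j))"
      using t.join_lub[OF hom_compat[OF s.inv_semigroup_axioms t.inv_semigroup_axioms hom c]] fj by simp
    moreover have "is_lub_in T (car T) (f ` A) (f j)" using insert s.join_set_eq[OF j(1)] by auto
    ultimately show ?case using t.lub_insert js by simp
  qed
qed

locale bool_inv_semigroup = dist_inv_semigroup +
  assumes boolean: "boolean_isg S"
begin

lemma gen_boolean: "gen_boolean_idem S" using boolean boolean_isg_def by blast

lemma ecompl_ex: assumes "idem S e" "idem S f" "leq S f e"
  shows "\<exists>g. idem S g \<and> leq S g e \<and> f \<cdot> g = z \<and> join S f g = e"
proof -
  obtain g where g: "g \<in> Idem S" "leq S g e" "Emeet S f g = z" "Ejoin S f g = e"
    using gen_boolean assms unfolding gen_boolean_idem_def Idem_def by blast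
  have gi: "idem S g" using g(1) by (simp add: Idem_def)
  show ?thesis using g gi assms Ejoin_join by auto
qed

lemma ecompl_uniq: assumes "idem S e" "idem S f" "idem S g" "idem S g'"
  "leq S g e" "f \<cdot> g = z" "join S f g = e" "leq S g' e" "f \<cdot> g' = z" "join S f g' = e"
  shows "g = g'"
proof -
  have le: "leq S g g'" if "idem S g" "idem S g'" "leq S g e" "f \<cdot> g = z" "join S f g' = e" for g g'
  proof -
    have c: "compat S f g'" using idem_compat assms that by blast
    have gf: "g \<cdot> f = z" using idem_comm[OF that(1) assms(2)] that(4) by simp
    have "g = g \<cdot> e" using idem_leq that assms by blast
    also have "\<dots> = join S (g \<cdot> f) (g \<cdot> g')" using that(5) mul_join_distrib[OF c] that idem_in by metis
    also have "\<dots> = g \<cdot> g'" using gf that idem_in by simp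
    finally show ?thesis using idem_leq that by blast
  qed
  show ?thesis using le[of g g'] le[of g' g] assms leq_antisym by blast
qed

lemma ecompl_props: assumes "idem S e" "idem S f" "leq S f e"
  shows "idem S (ecompl S e f) \<and> leq S (ecompl S e f) e \<and> f \<cdot> ecompl S e f = z \<and> join S f (ecompl S e f) = e"
proof -
  obtain g where g: "idem S g" "leq S g e" "f \<cdot> g = z" "join S f g = e" using ecompl_ex assms by blast
  have "ecompl S e f = g"
    unfolding ecompl_def
  proof (rule the_equality)
    show "g \<in> Idem S \<and> leq S g e \<and> Emeet S f g = z \<and> Ejoin S f g = e"
      using g assms Ejoin_join by (simp add: Idem_def)
    fix g' assume h: "g' \<in> Idem S \<and> leq S g' e \<and> Emeet S f g' = z \<and> Ejoin S f g' = e"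
    then have g': "idem S g'" by (simp add: Idem_def)
    then have "f \<cdot> g' = z" "join S f g' = e" using h assms Ejoin_join by auto
    then show "g' = g" using ecompl_uniq[OF assms(1,2) g' g(1)] h g by blast
  qed
  then show ?thesis using g by simp
qed

text \<open>ecompl e f is only meaningful for f <= e; applying it to e f yields the difference of
  arbitrary idempotents.\<close>
definition ediff where "ediff e f = ecompl S e (e \<cdot> f)"

lemma ediff_props: assumes "idem S e" "idem S f"
  shows "idem S (ediff e f)" "leq S (ediff e f) e" "ediff e f \<cdot> f = z" "join S (e \<cdot> f) (ediff e f) = e"
proof -
  have ef: "idem S (e \<cdot> f)" "leq S (e \<cdot> f) e" using assms idem_leq_mul1 by auto
  note P = ecompl_props[OF assms(1) ef(1) ef(2), folded ediff_def]
  show "idem S (ediff e f)" "leq S (ediff e f) e" "join S (e \<cdot> f) (ediff e f) = e" using P by blast+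
  have fC: "f \<in> C" "e \<in> C" using assms idem_in by blast+
  have dC: "ediff e f \<in> C" using P idem_in by blast
  have "ediff e f = ediff e f \<cdot> e" using P idem_leq assms by blast
  then have "ediff e f \<cdot> f = ediff e f \<cdot> (e \<cdot> f)" using fC dC by (metis assoc)
  also have "\<dots> = (e \<cdot> f) \<cdot> ediff e f" using idem_comm P ef by blast
  also have "\<dots> = z" using P by blast
  finally show "ediff e f \<cdot> f = z" .
qed

lemma ediff_idem[simp]: "idem S e \<Longrightarrow> idem S f \<Longrightarrow> idem S (ediff e f)" using ediff_props by blast
lemma ediff_in[simp]: "idem S e \<Longrightarrow> idem S f \<Longrightarrow> ediff e f \<in> C" using ediff_props idem_in by blast

lemma ediff_char: assumes "idem S x" "idem S e" "idem S f"
  shows "leq S x (ediff e f) \<longleftrightarrow> leq S x e \<and> x \<cdot> f = z"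
proof
  assume h: "leq S x (ediff e f)"
  then have "leq S x e" using ediff_props assms leq_trans by blast
  moreover have "x \<cdot> f = z"
  proof -
    have "x = x \<cdot> ediff e f" using h idem_leq assms by simp
    then have "x \<cdot> f = x \<cdot> (ediff e f \<cdot> f)" using assms idem_in by (metis assoc ediff_in)
    then show ?thesis using ediff_props assms idem_in by simp
  qed
  ultimately show "leq S x e \<and> x \<cdot> f = z" ..
next
  assume h: "leq S x e \<and> x \<cdot> f = z"
  have C: "x \<in> C" "e \<in> C" "f \<in> C" using assms idem_in by blast+
  have c: "compat S (e \<cdot> f) (ediff e f)" using idem_compat assms by simp
  have "x = x \<cdot> e" using h idem_leq assms by blast
  also have "\<dots> = x \<cdot> join S (e \<cdot> f) (ediff e f)" using ediff_props assms by simp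
  also have "\<dots> = join S (x \<cdot> (e \<cdot> f)) (x \<cdot> ediff e f)" using mul_join_distrib[OF c] C by simp
  also have "x \<cdot> (e \<cdot> f) = z"
  proof -
    have "x \<cdot> (e \<cdot> f) = (x \<cdot> e) \<cdot> f" using C by simp
    also have "\<dots> = x \<cdot> f" using `x = x \<cdot> e` by simp
    finally show ?thesis using h by simp
  qed
  also have "join S z (x \<cdot> ediff e f) = x \<cdot> ediff e f" using C assms by simp
  finally show "leq S x (ediff e f)" using idem_leq assms by simp
qed

lemma ediff_leqI: "idem S x \<Longrightarrow> idem S e \<Longrightarrow> idem S f \<Longrightarrow> leq S x e \<Longrightarrow> x \<cdot> f = z \<Longrightarrow> leq S x (ediff e f)"
  using ediff_char by blast

lemma ediff_self: assumes "idem S e" shows "ediff e e = z"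
proof -
  have "leq S (ediff e e) e" "ediff e e \<cdot> e = z" using ediff_props assms by blast+
  moreover have "ediff e e = ediff e e \<cdot> e" using calculation idem_leq assms by simp
  ultimately show ?thesis by simp
qed

lemma ediff_ortho: "idem S e \<Longrightarrow> idem S f \<Longrightarrow> f \<cdot> ediff e f = z"
  using ediff_props idem_comm by (metis ediff_idem)

lemma ediff_split: assumes "idem S x" "idem S f" shows "x = join S (x \<cdot> f) (ediff x f)"
  using ediff_props assms by simp

lemma ediff_mul_self: "idem S e \<Longrightarrow> idem S f \<Longrightarrow> ediff e (e \<cdot> f) = ediff e f"
  unfolding ediff_def by (simp add: idem_in)

lemma ediff_antimono:
  assumes e: "idem S e" and f: "idem S f" and g: "idem S g" and gf: "leq S g f"
  shows "leq S (ediff e f) (ediff e g)"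
proof (rule ediff_leqI)
  have "ediff e f \<cdot> g = (ediff e f \<cdot> f) \<cdot> g" using idem_leq'[OF g f] gf e f g idem_in by (metis assoc ediff_in)
  then show "ediff e f \<cdot> g = z" using ediff_props(3)[OF e f] g idem_in by simp
qed (use assms ediff_props(2) in auto)

lemma mul_le_ediff:
  assumes x: "idem S x" and e: "idem S e" and g: "idem S g" and xg: "x \<cdot> g = z"
  shows "leq S (x \<cdot> e) (ediff e g)"
proof (rule ediff_leqI)
  have "x \<cdot> e \<cdot> g = x \<cdot> g \<cdot> e" using idem_comm[OF e g] assms idem_in by (metis assoc)
  then show "x \<cdot> e \<cdot> g = z" using xg e idem_in by simp
qed (use assms idem_leq_mul2 in auto)

lemma ediff_mono:
  assumes "idem S e" "idem S e'" "idem S f" "leq S e e'"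
  shows "leq S (ediff e f) (ediff e' f)"
  using assms ediff_leqI ediff_idem ediff_props(2,3) leq_trans by meson

lemma ediff_le_join:
  assumes e: "idem S e" and f: "idem S f" and g: "idem S g"
  shows "leq S (ediff e g) (join S (ediff e f) (ediff f g))"
proof -
  define x where "x = ediff e g"
  have x: "idem S x" and xe: "leq S x e" and xg: "x \<cdot> g = z" using ediff_props x_def e g by simp_all
  have "leq S (join S (x \<cdot> f) (ediff x f)) (join S (ediff f g) (ediff e f))"
    using join_mono mul_le_ediff[OF x f g xg] ediff_mono[OF x e f xe] idem_compat x e f g by simp
  then show ?thesis using ediff_split[OF x f] join_comm x_def by metis
qed

lemma ediff_join_le_right:
  assumes f: "idem S f" and g: "idem S g"
  shows "leq S (ediff (join S f g) f) g"
proof -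
  have fg: "idem S (join S f g)" using join_idem f g by blast
  define x where "x = ediff (join S f g) f"
  have x: "idem S x" using x_def fg f by simp
  have "x = join S (x \<cdot> f) (x \<cdot> g)" using idem_below_join[OF x f g] ediff_props(2)[OF fg f] x_def by simp
  also have "x \<cdot> f = z" using ediff_props(3)[OF fg f] x_def by simp
  finally have "x = x \<cdot> g" using x g idem_in by simp
  then show ?thesis using idem_leq x g x_def by simp
qed

lemma ediff_join_le:
  assumes e: "idem S e" and f: "idem S f" and g: "idem S g" and h: "idem S h"
  shows "leq S (ediff (join S e f) (join S g h)) (join S (ediff e g) (ediff f h))"
proof -
  have cgh: "compat S g h" using idem_compat g h by blast
  have jef: "idem S (join S e f)" and jgh: "idem S (join S g h)" using join_idem assms by blast+
  define x where "x = ediff (join S e f) (join S g h)"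
  have x: "idem S x" using jef jgh x_def by simp
  have "leq S x (ediff (join S e f) g)" "leq S x (ediff (join S e f) h)"
    using ediff_antimono[OF jef jgh] join_ub1[OF cgh] join_ub2[OF cgh] g h x_def by blast+
  then have "x \<cdot> g = z" "x \<cdot> h = z" using ediff_char x jef g h by blast+
  then have "leq S (x \<cdot> e) (ediff e g)" "leq S (x \<cdot> f) (ediff f h)" using mul_le_ediff x assms by blast+
  then have "leq S (join S (x \<cdot> e) (x \<cdot> f)) (join S (ediff e g) (ediff f h))"
    using join_mono idem_compat x assms by simp
  moreover have "x = join S (x \<cdot> e) (x \<cdot> f)" using idem_below_join[OF x e f] ediff_props(2)[OF jef jgh] x_def by simp
  ultimately show ?thesis using x_def by simp
qed

lemma bdiff_eq: assumes "leq S b a" shows "bdiff S a b = a \<cdot> ediff (dom S a) (dom S b)"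
proof -
  have C: "a \<in> C" "b \<in> C" using assms leq_in_left leq_in_right by blast+
  have "dom S a \<cdot> dom S b = dom S b" using dom_mono[OF assms] idem_leq' C by simp
  then show ?thesis unfolding bdiff_def ediff_def by simp
qed

lemma bdiff_leq: assumes "leq S b a" shows "leq S (bdiff S a b) a"
  using bdiff_eq[OF assms] mul_idem_leq assms leq_in_left leq_in_right by (metis ediff_idem dom_idem)

lemma bdiff_in[simp]: "leq S b a \<Longrightarrow> bdiff S a b \<in> C"
  using bdiff_leq leq_in_left by blast

lemma dom_bdiff: assumes "leq S b a" shows "dom S (bdiff S a b) = ediff (dom S a) (dom S b)"
proof -
  have C: "a \<in> C" "b \<in> C" using assms leq_in_left leq_in_right by blast+
  have g: "idem S (ediff (dom S a) (dom S b))" using C by simp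
  have "dom S (bdiff S a b) = dom S a \<cdot> ediff (dom S a) (dom S b)" using bdiff_eq[OF assms] dom_mul_idem C g by simp
  also have "\<dots> = ediff (dom S a) (dom S b)" using ediff_props[of "dom S a" "dom S b"] C idem_leq' g by simp
  finally show ?thesis .
qed

lemma bdiff_join: assumes "leq S b a" shows "join S b (bdiff S a b) = a"
proof -
  have C: "a \<in> C" "b \<in> C" using assms leq_in_left leq_in_right by blast+
  have g: "idem S (ediff (dom S a) (dom S b))" using C by simp
  have c: "compat S (dom S b) (ediff (dom S a) (dom S b))" using idem_compat C g by simp
  have db: "dom S a \<cdot> dom S b = dom S b" using dom_mono[OF assms] idem_leq' C by simp
  have "join S b (bdiff S a b) = join S (a \<cdot> dom S b) (a \<cdot> ediff (dom S a) (dom S b))"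
    using bdiff_eq[OF assms] leqD[OF assms] by simp
  also have "\<dots> = a \<cdot> join S (dom S b) (ediff (dom S a) (dom S b))" using mul_join_distrib[OF c] C by simp
  also have "\<dots> = a \<cdot> dom S a" using ediff_props[of "dom S a" "dom S b"] C db by simp
  finally show ?thesis using C by simp
qed

lemma ran_join: assumes "compat S a b" shows "ran S (join S a b) = join S (ran S a) (ran S b)"
proof -
  have C: "a \<in> C" "b \<in> C" using assms compat_in by blast+
  have "ran S (join S a b) = dom S (iv (join S a b))" using dom_inv join_in assms by simp
  also have "\<dots> = dom S (join S (iv a) (iv b))" using inv_join[OF assms] by simp
  also have "\<dots> = join S (ran S a) (ran S b)" using dom_join[OF compat_inv[OF assms]] C by simp
  finally show ?thesis .
qed

lemma bdiff_trans_le: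
  assumes dc: "leq S d c" and ca: "leq S c a"
  shows "leq S (bdiff S a d) (join S (bdiff S a c) (bdiff S c d))"
proof -
  have da: "leq S d a" using leq_trans[OF dc ca] .
  have u: "leq S (bdiff S a c) a" "leq S (bdiff S c d) a" using bdiff_leq ca dc leq_trans by blast+
  have cu: "compat S (bdiff S a c) (bdiff S c d)" using compat_below[OF u] .
  have "dom S (join S (bdiff S a c) (bdiff S c d))
      = join S (ediff (dom S a) (dom S c)) (ediff (dom S c) (dom S d))"
    using dom_join[OF cu] dom_bdiff[OF ca] dom_bdiff[OF dc] by simp
  then have "leq S (dom S (bdiff S a d)) (dom S (join S (bdiff S a c) (bdiff S c d)))"
    using ediff_le_join dom_bdiff[OF da] leq_in_left[OF da] leq_in_left[OF ca] leq_in_right[OF ca] by simp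
  then show ?thesis using leq_iff_dom_leq[OF bdiff_leq[OF da] join_least[OF cu u]] by blast
qed

lemma bdiff_restrict_le:
  assumes cb: "leq S c b" and c'b: "leq S c' b"
  shows "leq S (bdiff S c (c \<cdot> dom S c')) (bdiff S b c')"
proof -
  have C: "b \<in> C" "c \<in> C" "c' \<in> C" using assms leq_in_left leq_in_right by blast+
  have cc: "leq S (c \<cdot> dom S c') c" using mul_idem_leq C by simp
  have "dom S (bdiff S c (c \<cdot> dom S c')) = ediff (dom S c) (dom S c')"
    using dom_bdiff[OF cc] dom_mul_idem ediff_mul_self C by simp
  then have "leq S (dom S (bdiff S c (c \<cdot> dom S c'))) (dom S (bdiff S b c'))"
    using ediff_mono dom_mono[OF cb] dom_bdiff[OF c'b] C by simp
  then show ?thesis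
    using leq_iff_dom_leq[OF leq_trans[OF bdiff_leq[OF cc] cb] bdiff_leq[OF c'b]] by blast
qed

lemma bdiff_inv_le:
  assumes ca: "leq S c a"
  shows "leq S (bdiff S (iv a) (iv c)) (iv (bdiff S a c))"
proof -
  have C: "a \<in> C" "c \<in> C" using ca leq_in_left leq_in_right by blast+
  have ci: "leq S (iv c) (iv a)" using leq_inv[OF ca] .
  have "ran S a = join S (ran S c) (ran S (bdiff S a c))"
    using ran_join[OF compat_below[OF ca bdiff_leq[OF ca]]] bdiff_join[OF ca] by simp
  then have "leq S (dom S (bdiff S (iv a) (iv c))) (dom S (iv (bdiff S a c)))"
    using ediff_join_le_right[OF ran_idem[OF C(2)] ran_idem[OF bdiff_in[OF ca]]] dom_bdiff[OF ci]
      dom_inv[OF bdiff_in[OF ca]] C by simp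
  then show ?thesis using leq_iff_dom_leq[OF bdiff_leq[OF ci] leq_inv[OF bdiff_leq[OF ca]]] by blast
qed

lemma bdiff_mul_left_le:
  assumes ca: "leq S c a" and s: "s \<in> C"
  shows "leq S (bdiff S (s \<cdot> a) (s \<cdot> c)) (s \<cdot> bdiff S a c)"
proof -
  have C: "a \<in> C" "c \<in> C" "s \<cdot> a \<in> C" using ca s leq_in_left leq_in_right by auto
  define g where "g = ediff (dom S a) (dom S c)"
  have g: "idem S g" using g_def C by simp
  have sc: "leq S (s \<cdot> c) (s \<cdot> a)" using leq_mul_left ca s by blast
  have "s \<cdot> c = (s \<cdot> a) \<cdot> dom S c" using leqD[OF ca] s C by (metis assoc dom_in)
  then have "dom S (bdiff S (s \<cdot> a) (s \<cdot> c)) = ediff (dom S (s \<cdot> a)) (dom S c)"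
    using dom_bdiff[OF sc] dom_mul_idem ediff_mul_self C by simp
  moreover have "dom S (s \<cdot> bdiff S a c) = dom S (s \<cdot> a) \<cdot> g"
    using bdiff_eq[OF ca] dom_mul_idem[OF C(3) g] g_def s C g idem_in by simp
  moreover have "leq S (ediff (dom S (s \<cdot> a)) (dom S c)) (dom S (s \<cdot> a) \<cdot> g)"
    using leq_idem_glb ediff_props(2) ediff_mono[OF _ _ _ dom_mul_le[OF s C(1)]] g g_def C by simp
  ultimately show ?thesis
    using leq_iff_dom_leq[OF bdiff_leq[OF sc] leq_mul_left[OF bdiff_leq[OF ca] s]] by simp
qed

lemma bdiff_join_le:
  assumes xy: "compat S x y" and cx: "leq S c x" and c'y: "leq S c' y"
  shows "leq S (bdiff S (join S x y) (join S c c')) (join S (bdiff S x c) (bdiff S y c'))"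
proof -
  have C: "x \<in> C" "y \<in> C" "c \<in> C" "c' \<in> C" using assms leq_in_left leq_in_right by blast+
  have cc: "compat S c c'" using compat_leq_compat[OF assms] .
  have m: "leq S (join S c c') (join S x y)" using join_mono[OF cc assms] .
  have u: "leq S (bdiff S x c) (join S x y)" "leq S (bdiff S y c') (join S x y)"
    using bdiff_leq leq_trans join_ub1 join_ub2 assms by blast+
  have cu: "compat S (bdiff S x c) (bdiff S y c')" using compat_below[OF u] .
  have "dom S (bdiff S (join S x y) (join S c c'))
      = ediff (join S (dom S x) (dom S y)) (join S (dom S c) (dom S c'))"
    using dom_bdiff[OF m] dom_join xy cc by simp
  moreover have "dom S (join S (bdiff S x c) (bdiff S y c'))
      = join S (ediff (dom S x) (dom S c)) (ediff (dom S y) (dom S c'))"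
    using dom_join[OF cu] dom_bdiff cx c'y by simp
  ultimately have "leq S (dom S (bdiff S (join S x y) (join S c c')))
      (dom S (join S (bdiff S x c) (bdiff S y c')))"
    using ediff_join_le C by simp
  then show ?thesis using leq_iff_dom_leq[OF bdiff_leq[OF m] join_least[OF cu u]] by blast
qed

lemma bdiff_self[simp]: "a \<in> C \<Longrightarrow> bdiff S a a = z"
  using bdiff_eq[of a a] ediff_self by simp

lemma mul_split_left:
  assumes x: "x \<in> C" and e: "idem S e" and f: "idem S f" and fx: "f \<cdot> x = x"
  shows "x = join S (e \<cdot> x) (ediff f e \<cdot> x)"
proof -
  have eC: "e \<in> C" and fC: "f \<in> C" using e f idem_in by blast+
  have cc: "compat S (f \<cdot> e) (ediff f e)" using idem_compat e f by simp
  have "x = join S (f \<cdot> e) (ediff f e) \<cdot> x" using ediff_props(4)[OF f e] fx by simp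
  also have "\<dots> = join S (f \<cdot> e \<cdot> x) (ediff f e \<cdot> x)" using join_mul_distrib[OF cc x] .
  also have "f \<cdot> e \<cdot> x = e \<cdot> x" using idem_comm[OF f e] fx x eC fC by (metis assoc)
  finally show ?thesis .
qed

lemma mul_split_right:
  assumes x: "x \<in> C" and e: "idem S e" and f: "idem S f" and xf: "x \<cdot> f = x"
  shows "x = join S (x \<cdot> e) (x \<cdot> ediff f e)"
proof -
  have eC: "e \<in> C" and fC: "f \<in> C" using e f idem_in by blast+
  have cc: "compat S (f \<cdot> e) (ediff f e)" using idem_compat e f by simp
  have "x = x \<cdot> join S (f \<cdot> e) (ediff f e)" using ediff_props(4)[OF f e] xf by simp
  also have "\<dots> = join S (x \<cdot> (f \<cdot> e)) (x \<cdot> ediff f e)" using mul_join_distrib[OF cc x] .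
  also have "x \<cdot> (f \<cdot> e) = x \<cdot> e" using xf x eC fC by (metis assoc)
  finally show ?thesis .
qed

lemma mul_ediff_dom: assumes "a \<in> C" "idem S e" shows "a \<cdot> ediff e (dom S a) = z"
proof -
  have "a \<cdot> ediff e (dom S a) = a \<cdot> (dom S a \<cdot> ediff e (dom S a))" using assms by simp
  then show ?thesis using ediff_ortho assms by simp
qed

lemma inv_mul_ediff_ran: "a \<in> C \<Longrightarrow> idem S e \<Longrightarrow> iv a \<cdot> ediff e (ran S a) = z"
  using mul_ediff_dom[of "iv a" e] by simp

text \<open>The part of b outside the domain and range of a is orthogonal to a, so it can be added
  to the restriction a d(b) without destroying compatibility with a.\<close>
lemma compat_corner:
  assumes a: "a \<in> C" and b: "b \<in> C"
  defines "b2 \<equiv> ediff (ran S b) (ran S a) \<cdot> (b \<cdot> ediff (dom S b) (dom S a))"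
  shows "compat S (a \<cdot> dom S b) b2" "compat S a (join S (a \<cdot> dom S b) b2)"
proof -
  define p q where "p = ediff (dom S b) (dom S a)" and "q = ediff (ran S b) (ran S a)"
  have pq: "idem S p" "idem S q" using a b p_def q_def by simp_all
  have pqC: "p \<in> C" "q \<in> C" using pq idem_in by blast+
  have b2: "b2 = q \<cdot> (b \<cdot> p)" and b2C: "b2 \<in> C" using b2_def p_def q_def pqC b by simp_all
  have c2: "compat S a b2"
  proof (rule compat_orthogonal)
    show "a \<in> C" "b2 \<in> C" using a b2C by simp_all
    have "iv a \<cdot> b2 = (iv a \<cdot> q) \<cdot> (b \<cdot> p)" using a b2 pqC b by simp
    then show "iv a \<cdot> b2 = z" using inv_mul_ediff_ran a b q_def pqC by simp
    have "a \<cdot> iv b2 = (a \<cdot> p) \<cdot> (iv b \<cdot> q)" using a b2 pq pqC b by simp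
    then show "a \<cdot> iv b2 = z" using mul_ediff_dom a b p_def pqC by simp
  qed
  have le: "leq S (a \<cdot> dom S b) a" using mul_idem_leq a b by simp
  show c1: "compat S (a \<cdot> dom S b) b2" using compat_down[OF le c2] .
  have "compat S a (a \<cdot> dom S b)" using compat_below[OF leq_refl[OF a] le] .
  then show "compat S a (join S (a \<cdot> dom S b) b2)" using compat_join c2 c1 by blast
qed

lemma ecompl_eq: assumes "idem S e" "idem S f" "leq S f e" "idem S g" "leq S g e" "f \<cdot> g = z" "join S f g = e"
  shows "ecompl S e f = g"
  using ecompl_props[OF assms(1-3)] ecompl_uniq[OF assms(1,2) _ assms(4)] assms by blast

end

lemma bmorphism_bdiff:
  assumes B: "bool_inv_semigroup B" and T: "bool_inv_semigroup T" and h: "bmorphism B T h" and yx: "leq B y x"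
  shows "h (bdiff B x y) = bdiff T (h x) (h y)"
proof -
  interpret b: bool_inv_semigroup B by fact
  interpret t: bool_inv_semigroup T by fact
  have hh: "hom B T h" using h bmorphism_def by blast
  have C: "x \<in> car B" "y \<in> car B" using yx b.leq_in_left b.leq_in_right by blast+
  define e where "e = dom B x"
  define f where "f = dom B y"
  define g where "g = ecompl B e f"
  have ei: "idem B e" "idem B f" using C e_def f_def by simp_all
  have fe: "leq B f e" using b.dom_mono yx e_def f_def by blast
  have gp: "idem B g" "leq B g e" "mul B f g = zer B" "join B f g = e"
    using b.ecompl_props[OF ei fe] g_def by blast+
  have he: "h e = dom T (h x)" "h f = dom T (h y)" using hom_dom[OF b.inv_semigroup_axioms t.inv_semigroup_axioms hh] C e_def f_def by blast+
  have "ecompl T (h e) (h f) = h g"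
  proof (rule t.ecompl_eq)
    show "idem T (h e)" "idem T (h f)" "idem T (h g)" using hom_idem[OF hh] ei gp by blast+
    show "leq T (h f) (h e)" "leq T (h g) (h e)" using hom_leq[OF b.inv_semigroup_axioms t.inv_semigroup_axioms hh] fe gp by blast+
    have fgC: "f \<in> car B" "g \<in> car B" using b.idem_in ei gp by blast+
    have "mul T (h f) (h g) = h (mul B f g)" using hom_mul[OF hh fgC] by simp
    then show "mul T (h f) (h g) = zer T" using hom_zer[OF hh] gp by simp
    have "compat B f g" using b.idem_compat ei gp by blast
    moreover have "\<forall>a\<in>car B. \<forall>b\<in>car B. compat B a b \<longrightarrow> h (join B a b) = join T (h a) (h b)"
      using h unfolding bmorphism_def by blast
    ultimately have "h (join B f g) = join T (h f) (h g)" using fgC by blast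
    then show "join T (h f) (h g) = h e" using gp by simp
  qed
  moreover have "h (bdiff B x y) = mul T (h x) (h g)"
  proof -
    have "bdiff B x y = mul B x g" unfolding bdiff_def g_def e_def f_def by simp
    moreover have "g \<in> car B" using b.idem_in gp by blast
    ultimately show ?thesis using hom_mul[OF hh C(1)] by simp
  qed
  ultimately show ?thesis unfolding bdiff_def using he by simp
qed

lemma bool_inv_semigroupI: "boolean_isg B \<Longrightarrow> bool_inv_semigroup B"
  unfolding bool_inv_semigroup_def bool_inv_semigroup_axioms_def dist_inv_semigroup_def dist_inv_semigroup_axioms_def inv_semigroup_def boolean_isg_def distributive_isg_def by blast

section \<open>The congruence of an additive ideal\<close>

locale ideal_quotient = bool_inv_semigroup +
  fixes I
  assumes ideal: "additive_ideal S I" and zer_in_ideal: "z \<in> I"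
begin

abbreviation E where "E \<equiv> eps S I"

lemma ideal_in: "x \<in> I \<Longrightarrow> x \<in> C" using ideal unfolding additive_ideal_def by blast
lemma ideal_mul_left: "s \<in> C \<Longrightarrow> x \<in> I \<Longrightarrow> s \<cdot> x \<in> I" using ideal unfolding additive_ideal_def by blast
lemma ideal_mul_right: "s \<in> C \<Longrightarrow> x \<in> I \<Longrightarrow> x \<cdot> s \<in> I" using ideal unfolding additive_ideal_def by blast
lemma ideal_join: "compat S x y \<Longrightarrow> x \<in> I \<Longrightarrow> y \<in> I \<Longrightarrow> join S x y \<in> I" using ideal unfolding additive_ideal_def by blast
lemma ideal_down: "leq S x y \<Longrightarrow> y \<in> I \<Longrightarrow> x \<in> I"
  using leqD[of x y] ideal_mul_right[of "dom S x" y] by simp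
lemma ideal_inv: assumes "x \<in> I" shows "iv x \<in> I"
proof -
  have xC: "x \<in> C" using ideal_in assms by blast
  have "x \<cdot> iv x \<in> I" using ideal_mul_right xC assms by simp
  then have "iv x \<cdot> (x \<cdot> iv x) \<in> I" using ideal_mul_left[OF inv_in[OF xC]] by blast
  then show ?thesis using xC by simp
qed
lemma ideal_below_join: "leq S x (join S p q) \<Longrightarrow> compat S p q \<Longrightarrow> p \<in> I \<Longrightarrow> q \<in> I \<Longrightarrow> x \<in> I"
  using ideal_join ideal_down by blast

lemma eps_iff: "(a, b) \<in> E \<longleftrightarrow> a \<in> C \<and> b \<in> C \<and> (\<exists>c\<in>C. leq S c a \<and> leq S c b \<and> bdiff S a c \<in> I \<and> bdiff S b c \<in> I)"
  unfolding eps_def by blast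

lemma epsI: "leq S c a \<Longrightarrow> leq S c b \<Longrightarrow> bdiff S a c \<in> I \<Longrightarrow> bdiff S b c \<in> I \<Longrightarrow> (a, b) \<in> E"
  unfolding eps_iff using leq_in_left leq_in_right by blast

lemma epsE: assumes "(a, b) \<in> E"
  obtains c where "leq S c a" "leq S c b" "bdiff S a c \<in> I" "bdiff S b c \<in> I"
  using assms unfolding eps_iff by blast

lemma eps_in: "(a, b) \<in> E \<Longrightarrow> a \<in> C \<and> b \<in> C" unfolding eps_iff by blast

lemma eps_refl: "a \<in> C \<Longrightarrow> (a, a) \<in> E"
  using epsI[of a a a] zer_in_ideal by simp

lemma eps_sym: "(a, b) \<in> E \<Longrightarrow> (b, a) \<in> E"
  unfolding eps_iff by blast

lemma bdiff_restrict_in_ideal: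
  assumes "leq S c a" "leq S c b" "leq S c' b" "bdiff S a c \<in> I" "bdiff S b c' \<in> I"
  shows "bdiff S a (c \<cdot> dom S c') \<in> I"
proof -
  have cc: "leq S (c \<cdot> dom S c') c" using mul_idem_leq assms leq_in_left by simp
  have "compat S (bdiff S a c) (bdiff S c (c \<cdot> dom S c'))"
    using compat_below bdiff_leq leq_trans assms(1) cc by metis
  moreover have "bdiff S c (c \<cdot> dom S c') \<in> I" using ideal_down[OF bdiff_restrict_le] assms by blast
  ultimately show ?thesis using ideal_below_join[OF bdiff_trans_le[OF cc assms(1)]] assms(4) by blast
qed

lemma eps_trans: assumes "(a, b) \<in> E" "(b, d) \<in> E" shows "(a, d) \<in> E"
proof -
  obtain c where c: "leq S c a" "leq S c b" "bdiff S a c \<in> I" "bdiff S b c \<in> I" using epsE assms(1) by blast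
  obtain c' where c': "leq S c' b" "leq S c' d" "bdiff S b c' \<in> I" "bdiff S d c' \<in> I" using epsE assms(2) by blast
  have cc: "compat S c c'" using compat_below c c' by blast
  have eq: "c \<cdot> dom S c' = c' \<cdot> dom S c" using compat_dom[OF cc] .
  have C: "c \<in> C" "c' \<in> C" using c c' leq_in_left by blast+
  have 1: "leq S (c \<cdot> dom S c') a" using leq_trans[OF mul_idem_leq c(1)] C by simp
  have 2: "leq S (c \<cdot> dom S c') d" using leq_trans[OF mul_idem_leq c'(2)] C eq by simp
  have 3: "bdiff S a (c \<cdot> dom S c') \<in> I" using bdiff_restrict_in_ideal[OF c(1,2) c'(1) c(3) c'(3)] .
  have 4: "bdiff S d (c \<cdot> dom S c') \<in> I" using bdiff_restrict_in_ideal[OF c'(2,1) c(2) c'(4) c(4)] eq by simp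
  show ?thesis using epsI[OF 1 2 3 4] .
qed

lemma bdiff_mul_left_in_ideal:
  "leq S c a \<Longrightarrow> bdiff S a c \<in> I \<Longrightarrow> s \<in> C \<Longrightarrow> bdiff S (s \<cdot> a) (s \<cdot> c) \<in> I"
  using ideal_down[OF bdiff_mul_left_le] ideal_mul_left by blast

lemma eps_mul_left: assumes "(a, b) \<in> E" "s \<in> C" shows "(s \<cdot> a, s \<cdot> b) \<in> E"
proof -
  obtain c where c: "leq S c a" "leq S c b" "bdiff S a c \<in> I" "bdiff S b c \<in> I" using epsE assms(1) by blast
  show ?thesis using epsI[OF leq_mul_left[OF c(1) assms(2)] leq_mul_left[OF c(2) assms(2)]
    bdiff_mul_left_in_ideal[OF c(1,3) assms(2)] bdiff_mul_left_in_ideal[OF c(2,4) assms(2)]] .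
qed

lemma bdiff_inv_in_ideal: "leq S c a \<Longrightarrow> bdiff S a c \<in> I \<Longrightarrow> bdiff S (iv a) (iv c) \<in> I"
  using ideal_down[OF bdiff_inv_le] ideal_inv by blast

lemma eps_inv: assumes "(a, b) \<in> E" shows "(iv a, iv b) \<in> E"
proof -
  obtain c where c: "leq S c a" "leq S c b" "bdiff S a c \<in> I" "bdiff S b c \<in> I" using epsE assms(1) by blast
  show ?thesis using epsI[OF leq_inv[OF c(1)] leq_inv[OF c(2)] bdiff_inv_in_ideal[OF c(1,3)] bdiff_inv_in_ideal[OF c(2,4)]] .
qed

lemma eps_mul_right: assumes "(a, b) \<in> E" "s \<in> C" shows "(a \<cdot> s, b \<cdot> s) \<in> E"
proof -
  have C: "a \<in> C" "b \<in> C" using eps_in assms by blast+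
  have "(iv s \<cdot> iv a, iv s \<cdot> iv b) \<in> E" using eps_mul_left[OF eps_inv[OF assms(1)]] assms by simp
  then have "(iv (iv s \<cdot> iv a), iv (iv s \<cdot> iv b)) \<in> E" by (rule eps_inv)
  then show ?thesis using C assms by simp
qed

lemma eps_cong: assumes "(a, a') \<in> E" "(b, b') \<in> E" shows "(a \<cdot> b, a' \<cdot> b') \<in> E"
proof -
  have C: "a' \<in> C" "b \<in> C" using eps_in assms by blast+
  show ?thesis using eps_trans[OF eps_mul_right[OF assms(1) C(2)] eps_mul_left[OF assms(2) C(1)]] .
qed

lemma eps_equiv: "equiv C E"
proof (rule equivI)
  show "E \<subseteq> C \<times> C" using eps_in by auto
  show "refl_on C E" by (rule refl_onI) (use eps_refl in blast)
  show "sym E" unfolding sym_def using eps_sym by blast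
  show "trans E" unfolding trans_def using eps_trans by blast
qed

lemma bdiff_join_in_ideal:
  assumes "compat S x y" "leq S c x" "leq S c' y" "bdiff S x c \<in> I" "bdiff S y c' \<in> I"
  shows "bdiff S (join S x y) (join S c c') \<in> I"
proof -
  have "leq S (bdiff S x c) (join S x y)" "leq S (bdiff S y c') (join S x y)"
    using bdiff_leq leq_trans join_ub1 join_ub2 assms by blast+
  then have "compat S (bdiff S x c) (bdiff S y c')" by (rule compat_below)
  then show ?thesis using ideal_below_join[OF bdiff_join_le[OF assms(1-3)]] assms(4,5) by blast
qed

lemma eps_join: assumes "compat S x y" "compat S x' y'" "(x, x') \<in> E" "(y, y') \<in> E"
  shows "(join S x y, join S x' y') \<in> E"
proof -
  obtain c where c: "leq S c x" "leq S c x'" "bdiff S x c \<in> I" "bdiff S x' c \<in> I" using epsE assms(3) by blast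
  obtain c' where c': "leq S c' y" "leq S c' y'" "bdiff S y c' \<in> I" "bdiff S y' c' \<in> I" using epsE assms(4) by blast
  have "compat S c c'" using compat_leq_compat[OF assms(1) c(1) c'(1)] .
  then show ?thesis
    using epsI[OF join_mono[OF _ assms(1) c(1) c'(1)] join_mono[OF _ assms(2) c(2) c'(2)]
        bdiff_join_in_ideal[OF assms(1) c(1) c'(1) c(3) c'(3)] bdiff_join_in_ideal[OF assms(2) c(2) c'(2) c(4) c'(4)]]
    by blast
qed

lemma eps_idem_representative: assumes "a \<in> C" "(a \<cdot> a, a) \<in> E" shows "\<exists>e. idem S e \<and> (a, e) \<in> E"
proof -
  obtain c where c: "leq S c (a \<cdot> a)" "leq S c a" "bdiff S (a \<cdot> a) c \<in> I" "bdiff S a c \<in> I" using epsE assms(2) by blast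
  have cC: "c \<in> C" using c leq_in_left by blast
  have c1: "c = a \<cdot> dom S c" using leqD c(2) by blast
  have c2: "c = a \<cdot> a \<cdot> dom S c" using leqD c(1) by blast
  have cac: "c = a \<cdot> c" using c1 c2 assms cC by (metis assoc dom_in)
  have "ran S c = a \<cdot> ran S c" using cac assms cC by (metis assoc inv_in ran_eq)
  then have rca: "leq S (ran S c) a" using mul_idem_leqI[of a "ran S c" "ran S c"] assms cC by simp
  have "c = ran S c \<cdot> a" using leq_ran c(2) by blast
  moreover have "ran S c = ran S c \<cdot> a" using leq_ran[OF rca] cC by simp
  ultimately have "c = ran S c" by simp
  then have ci: "idem S c" using cC by (metis ran_idem)
  have "(a, c) \<in> E" using epsI[OF c(2) leq_refl[OF cC] c(4)] cC zer_in_ideal by simp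
  then show ?thesis using ci by blast
qed

end

section \<open>The quotient by an additive ideal is Boolean\<close>

lemma inverse_unique_commuting_idems:
  fixes m :: "'x \<Rightarrow> 'x \<Rightarrow> 'x" and A :: "'x set"
  assumes cl: "\<And>a b. a \<in> A \<Longrightarrow> b \<in> A \<Longrightarrow> m a b \<in> A"
    and as: "\<And>a b c. a \<in> A \<Longrightarrow> b \<in> A \<Longrightarrow> c \<in> A \<Longrightarrow> m (m a b) c = m a (m b c)"
    and ic: "\<And>p q. p \<in> A \<Longrightarrow> q \<in> A \<Longrightarrow> m p p = p \<Longrightarrow> m q q = q \<Longrightarrow> m p q = m q p"
    and x: "x \<in> A" and y: "y \<in> A" and y': "y' \<in> A"
    and h1: "m (m x y) x = x" "m (m y x) y = y" and h2: "m (m x y') x = x" "m (m y' x) y' = y'"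
  shows "y = y'"
proof -
  have yx: "m (m y x) (m y x) = m y x" using h1 x y cl as by metis
  have y'x: "m (m y' x) (m y' x) = m y' x" using h2 x y' cl as by metis
  have xy: "m (m x y) (m x y) = m x y" using h1 x y cl as by metis
  have xy': "m (m x y') (m x y') = m x y'" using h2 x y' cl as by metis
  have c1: "m (m y x) (m y' x) = m (m y' x) (m y x)" using ic yx y'x cl x y y' by blast
  have c2: "m (m x y) (m x y') = m (m x y') (m x y)" using ic xy xy' cl x y y' by blast
  have "y = m (m y x) y" using h1 by simp
  also have "\<dots> = m (m y (m (m x y') x)) y" using h2 by simp
  also have "\<dots> = m (m (m y x) (m y' x)) y" using as cl x y y' by simp
  also have "\<dots> = m (m (m y' x) (m y x)) y" using c1 by simp
  also have "\<dots> = m y' (m x (m (m y x) y))" using as cl x y y' by simp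
  also have "\<dots> = m y' (m x y)" using h1 by simp
  finally have 1: "y = m y' (m x y)" .
  have "y' = m (m y' x) y'" using h2 by simp
  also have "\<dots> = m (m y' (m (m x y) x)) y'" using h1 by simp
  also have "\<dots> = m y' (m (m x y) (m x y'))" using as cl x y y' by simp
  also have "\<dots> = m y' (m (m x y') (m x y))" using c2 by simp
  also have "\<dots> = m (m (m y' x) y') (m x y)" using as cl x y y' by simp
  also have "\<dots> = m y' (m x y)" using h2 by simp
  finally show ?thesis using 1 by simp
qed

context ideal_quotient begin

abbreviation Q where "Q \<equiv> quot_isg S E"
abbreviation cl where "cl x \<equiv> E `` {x}"

lemma quot_car: "car Q = C // E" by (simp add: quot_isg_def)
lemma quot_zer: "zer Q = cl z" by (simp add: quot_isg_def)
lemma quot_mul: "mul Q X Y = cl ((SOME x. x \<in> X) \<cdot> (SOME y. y \<in> Y))" by (simp add: quot_isg_def)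

lemma cl_in[simp]: "a \<in> C \<Longrightarrow> cl a \<in> car Q" using quot_car quotientI by metis
lemma quot_cl_surj: "X \<in> car Q \<Longrightarrow> \<exists>a\<in>C. X = cl a" using quot_car quotientE by metis
lemma cl_eq: "a \<in> C \<Longrightarrow> b \<in> C \<Longrightarrow> cl a = cl b \<longleftrightarrow> (a, b) \<in> E"
  using eq_equiv_class_iff[OF eps_equiv] by blast

lemma some_in_class: assumes "a \<in> C" shows "(SOME x. x \<in> cl a) \<in> C" "((SOME x. x \<in> cl a), a) \<in> E"
proof -
  have "a \<in> cl a" using equiv_class_self[OF eps_equiv assms] .
  then have "(SOME x. x \<in> cl a) \<in> cl a" by (rule someI)
  then have "(a, SOME x. x \<in> cl a) \<in> E" by simp
  then show "(SOME x. x \<in> cl a) \<in> C" "((SOME x. x \<in> cl a), a) \<in> E" using eps_sym eps_in by blast+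
qed

lemma cl_mul[simp]: assumes "a \<in> C" "b \<in> C" shows "mul Q (cl a) (cl b) = cl (a \<cdot> b)"
proof -
  have "((SOME x. x \<in> cl a) \<cdot> (SOME x. x \<in> cl b), a \<cdot> b) \<in> E"
    using eps_cong some_in_class assms by blast
  then show ?thesis using quot_mul cl_eq some_in_class assms by simp
qed

lemma quot_idem_lift: assumes "idem Q P" shows "\<exists>e. idem S e \<and> P = cl e"
proof -
  have P: "P \<in> car Q" "mul Q P P = P" using assms unfolding idem_def by blast+
  obtain x where x: "x \<in> C" "P = cl x" using quot_cl_surj P(1) by blast
  have "cl (x \<cdot> x) = cl x" using P(2) x by simp
  then have "(x \<cdot> x, x) \<in> E" using cl_eq x by simp
  then obtain e where e: "idem S e" "(x, e) \<in> E" using eps_idem_representative x by blast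
  then have "cl x = cl e" using cl_eq x idem_in by blast
  then show ?thesis using e x by blast
qed

lemma quot_mul_in: "U \<in> car Q \<Longrightarrow> V \<in> car Q \<Longrightarrow> mul Q U V \<in> car Q"
  using quot_cl_surj by (metis cl_in cl_mul mul_in)

lemma quot_assoc: assumes "U \<in> car Q" "V \<in> car Q" "W \<in> car Q" shows "mul Q (mul Q U V) W = mul Q U (mul Q V W)"
proof -
  obtain u v w where "u \<in> C" "v \<in> C" "w \<in> C" "U = cl u" "V = cl v" "W = cl w" using quot_cl_surj assms by metis
  then show ?thesis by simp
qed

lemma quot_idem_comm: assumes "P \<in> car Q" "R \<in> car Q" "mul Q P P = P" "mul Q R R = R" shows "mul Q P R = mul Q R P"
proof -
  have "idem Q P" "idem Q R" using assms unfolding idem_def by blast+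
  then obtain e f where "idem S e" "idem S f" "P = cl e" "R = cl f" using quot_idem_lift by metis
  then show ?thesis using idem_comm idem_in by simp
qed

lemma quot_inv_semigroup: "inv_semigroup Q"
proof -
  have 1: "zer Q \<in> car Q" using quot_zer by simp
  have 2: "\<forall>X\<in>car Q. \<forall>Y\<in>car Q. mul Q X Y \<in> car Q" using quot_mul_in by blast
  have 3: "\<forall>X\<in>car Q. \<forall>Y\<in>car Q. \<forall>W\<in>car Q. mul Q (mul Q X Y) W = mul Q X (mul Q Y W)" using quot_assoc by blast
  have 4: "\<forall>X\<in>car Q. mul Q (zer Q) X = zer Q \<and> mul Q X (zer Q) = zer Q"
  proof
    fix X assume X: "X \<in> car Q"
    obtain a where a: "a \<in> C" "X = cl a" using quot_cl_surj X by metis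
    show "mul Q (zer Q) X = zer Q \<and> mul Q X (zer Q) = zer Q" using a quot_zer by simp
  qed
  have 5: "\<forall>X\<in>car Q. \<exists>!Y. Y \<in> car Q \<and> mul Q (mul Q X Y) X = X \<and> mul Q (mul Q Y X) Y = Y"
  proof
    fix X assume X: "X \<in> car Q"
    obtain a where a: "a \<in> C" "X = cl a" using quot_cl_surj X by metis
    show "\<exists>!Y. Y \<in> car Q \<and> mul Q (mul Q X Y) X = X \<and> mul Q (mul Q Y X) Y = Y"
    proof
      show "cl (iv a) \<in> car Q \<and> mul Q (mul Q X (cl (iv a))) X = X \<and> mul Q (mul Q (cl (iv a)) X) (cl (iv a)) = cl (iv a)"
        using a by simp
      fix Y assume h: "Y \<in> car Q \<and> mul Q (mul Q X Y) X = X \<and> mul Q (mul Q Y X) Y = Y"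
      have i: "cl (iv a) \<in> car Q" "mul Q (mul Q X (cl (iv a))) X = X" "mul Q (mul Q (cl (iv a)) X) (cl (iv a)) = cl (iv a)"
        using a by simp_all
      show "Y = cl (iv a)"
        using inverse_unique_commuting_idems[of "car Q" "mul Q", OF quot_mul_in quot_assoc quot_idem_comm X _ i(1) _ _ i(2,3)] h by blast
    qed
  qed
  show ?thesis unfolding inv_semigroup_def inverse_semigroup_def using 1 2 3 4 5 by blast
qed

lemma quot_inverse_semigroup: "inverse_semigroup Q" using quot_inv_semigroup inv_semigroup_def by blast

lemma cl_hom: "hom S Q cl" unfolding hom_def using quot_zer by simp

lemma cl_inv: "a \<in> C \<Longrightarrow> cl (iv a) = inv Q (cl a)" using hom_inv[OF inv_semigroup_axioms quot_inv_semigroup cl_hom] by blast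
lemma cl_dom: "a \<in> C \<Longrightarrow> cl (dom S a) = dom Q (cl a)" using hom_dom[OF inv_semigroup_axioms quot_inv_semigroup cl_hom] by blast
lemma cl_leq: "leq S a b \<Longrightarrow> leq Q (cl a) (cl b)" using hom_leq[OF inv_semigroup_axioms quot_inv_semigroup cl_hom] by blast
lemma cl_compat: "compat S a b \<Longrightarrow> compat Q (cl a) (cl b)" using hom_compat[OF inv_semigroup_axioms quot_inv_semigroup cl_hom] by blast
lemma cl_idem: "idem S e \<Longrightarrow> idem Q (cl e)" using hom_idem[OF cl_hom] by blast

lemma cl_leq_iff: assumes "a \<in> C" "w \<in> C" shows "leq Q (cl a) (cl w) \<longleftrightarrow> (a, w \<cdot> dom S a) \<in> E"
proof -
  have "leq Q (cl a) (cl w) \<longleftrightarrow> cl a = mul Q (cl w) (dom Q (cl a))" unfolding leq_def using assms by simp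
  also have "\<dots> \<longleftrightarrow> cl a = cl (w \<cdot> dom S a)" using cl_dom[OF assms(1), symmetric] assms by simp
  also have "\<dots> \<longleftrightarrow> (a, w \<cdot> dom S a) \<in> E" using cl_eq assms by simp
  finally show ?thesis .
qed

lemma cl_join: assumes "compat S a b" shows "is_lub_in Q (car Q) {cl a, cl b} (cl (join S a b))"
proof (rule inv_semigroup.lubI[OF quot_inv_semigroup])
  have C: "a \<in> C" "b \<in> C" using assms compat_in by blast+
  show "cl (join S a b) \<in> car Q" using assms by simp
  show "\<And>x. x \<in> {cl a, cl b} \<Longrightarrow> leq Q x (cl (join S a b))" using cl_leq join_ub1 join_ub2 assms by blast
  fix Y assume Y: "Y \<in> car Q" and ub: "\<And>x. x \<in> {cl a, cl b} \<Longrightarrow> leq Q x Y"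
  obtain w where w: "w \<in> C" "Y = cl w" using quot_cl_surj Y by blast
  have 1: "(a, w \<cdot> dom S a) \<in> E" using cl_leq_iff ub w C by blast
  have 2: "(b, w \<cdot> dom S b) \<in> E" using cl_leq_iff ub w C by blast
  have cw: "compat S (w \<cdot> dom S a) (w \<cdot> dom S b)"
    using compat_below[OF mul_idem_leq[OF w(1) dom_idem[OF C(1)]] mul_idem_leq[OF w(1) dom_idem[OF C(2)]]] .
  have "(join S a b, join S (w \<cdot> dom S a) (w \<cdot> dom S b)) \<in> E" using eps_join[OF assms cw 1 2] .
  moreover have "join S (w \<cdot> dom S a) (w \<cdot> dom S b) = w \<cdot> dom S (join S a b)"
    using mul_join_distrib[of "dom S a" "dom S b" w] idem_compat dom_join assms w C by simp
  ultimately show "leq Q (cl (join S a b)) Y" using cl_leq_iff w assms by simp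
qed

lemma quot_join_cl: "compat S a b \<Longrightarrow> join Q (cl a) (cl b) = cl (join S a b)"
  using inv_semigroup.join_eq[OF quot_inv_semigroup] cl_join by blast

lemma quot_compat_dom:
  assumes a: "a \<in> C" and b: "b \<in> C" and cq: "compat Q (cl a) (cl b)"
  shows "(b \<cdot> dom S a, a \<cdot> dom S b) \<in> E"
proof -
  have "mul Q (cl a) (dom Q (cl b)) = mul Q (cl b) (dom Q (cl a))"
    using inv_semigroup.compat_dom[OF quot_inv_semigroup cq] .
  then have "cl (a \<cdot> dom S b) = cl (b \<cdot> dom S a)" using cl_dom[OF a, symmetric] cl_dom[OF b, symmetric] a b by simp
  then show ?thesis using cl_eq a b eps_sym by simp
qed

lemma quot_compat_orthogonal:
  assumes a: "a \<in> C" and b: "b \<in> C" and p: "p \<in> C" and cq: "compat Q (cl a) (cl b)" and ap: "a \<cdot> p = z"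
  shows "(ran S a \<cdot> (b \<cdot> p), z) \<in> E"
proof -
  have "idem Q (mul Q (inv Q (cl a)) (cl b))" using cq unfolding compat_def by blast
  then have i: "idem Q (cl (iv a \<cdot> b))" using cl_inv[OF a, symmetric] a b by simp
  have "cl (iv (iv a \<cdot> b)) = inv Q (cl (iv a \<cdot> b))" using cl_inv[of "iv a \<cdot> b"] a b by simp
  also have "\<dots> = cl (iv a \<cdot> b)" using inv_semigroup.inv_idem[OF quot_inv_semigroup i] .
  finally have "(iv a \<cdot> b, iv b \<cdot> a) \<in> E" using cl_eq a b eps_sym by simp
  then have "(a \<cdot> ((iv a \<cdot> b) \<cdot> p), a \<cdot> ((iv b \<cdot> a) \<cdot> p)) \<in> E"
    using eps_mul_left[OF eps_mul_right] a p by simp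
  moreover have "a \<cdot> ((iv b \<cdot> a) \<cdot> p) = z" using ap a b p by simp
  moreover have "a \<cdot> ((iv a \<cdot> b) \<cdot> p) = ran S a \<cdot> (b \<cdot> p)" using a b p by (simp add: ran_eq)
  ultimately show ?thesis by simp
qed

lemma compat_representative:
  assumes a: "a \<in> C" and b: "b \<in> C" and cq: "compat Q (cl a) (cl b)"
  shows "\<exists>b'. compat S a b' \<and> cl b' = cl b"
proof -
  define p q where "p = ediff (dom S b) (dom S a)" and "q = ediff (ran S b) (ran S a)"
  define b2 where "b2 = q \<cdot> (b \<cdot> p)"
  note corner = compat_corner[OF a b, folded p_def q_def b2_def]
  have pq: "idem S p" "idem S q" using a b p_def q_def by simp_all
  have pC: "p \<in> C" and bpC: "b \<cdot> p \<in> C" and b2C: "b2 \<in> C" using pq b idem_in b2_def by simp_all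
  have ap: "a \<cdot> p = z" using mul_ediff_dom a b p_def by simp
  have "(b \<cdot> p, b2) \<in> E"
  proof -
    have split: "b \<cdot> p = join S (ran S a \<cdot> (b \<cdot> p)) b2"
      using mul_split_left[OF bpC ran_idem[OF a] ran_idem[OF b]] b pC q_def b2_def by simp
    have "compat S (ran S a \<cdot> (b \<cdot> p)) b2"
      using compat_below[OF idem_mul_leq[OF bpC ran_idem[OF a]] idem_mul_leq[OF bpC pq(2)]] b2_def by simp
    then have "(join S (ran S a \<cdot> (b \<cdot> p)) b2, join S z b2) \<in> E"
      using eps_join[OF _ _ quot_compat_orthogonal[OF a b pC cq ap] eps_refl[OF b2C]]
        compat_sym[OF compat_zer[OF b2C]] by blast
    then show ?thesis using split b2C by simp
  qed
  moreover have "b = join S (b \<cdot> dom S a) (b \<cdot> p)"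
    using mul_split_right[OF b dom_idem[OF a] dom_idem[OF b]] b p_def by simp
  moreover have "compat S (b \<cdot> dom S a) (b \<cdot> p)"
    using compat_below[OF mul_idem_leq[OF b dom_idem[OF a]] mul_idem_leq[OF b pq(1)]] .
  ultimately have "(b, join S (a \<cdot> dom S b) b2) \<in> E"
    using eps_join corner(1) quot_compat_dom[OF a b cq] by metis
  then show ?thesis using corner(2) cl_eq b compat_in by metis
qed

lemma quot_distributive: "distributive_isg Q"
  unfolding distributive_isg_def
proof (intro conjI ballI impI)
  show "inverse_semigroup Q" using quot_inverse_semigroup .
  fix X Y assume X: "X \<in> car Q" and Y: "Y \<in> car Q" and c: "compat Q X Y"
  obtain a b where ab: "a \<in> C" "b \<in> C" "X = cl a" "Y = cl b" using quot_cl_surj X Y by metis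
  obtain b' where b': "compat S a b'" "cl b' = cl b" using compat_representative ab c by blast
  have L: "is_lub_in Q (car Q) {X, Y} (cl (join S a b'))" using cl_join[OF b'(1)] ab b' by simp
  then show "\<exists>x. is_lub_in Q (car Q) {X, Y} x" by blast
  have J: "join Q X Y = cl (join S a b')" using inv_semigroup.join_eq[OF quot_inv_semigroup L] .
  have b'C: "b' \<in> C" using b' compat_in by blast
  fix W assume W: "W \<in> car Q"
  obtain s where s: "s \<in> C" "W = cl s" using quot_cl_surj W by blast
  have "mul Q W (join Q X Y) = cl (s \<cdot> join S a b')" using J s b' by simp
  also have "\<dots> = cl (join S (s \<cdot> a) (s \<cdot> b'))" using mul_join_distrib b' s by simp
  also have "\<dots> = join Q (cl (s \<cdot> a)) (cl (s \<cdot> b'))" using quot_join_cl compat_mul_left b' s by simp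
  also have "\<dots> = join Q (mul Q W X) (mul Q W Y)" using s ab b'(2)[symmetric] b'C by simp
  finally show "mul Q W (join Q X Y) = join Q (mul Q W X) (mul Q W Y)" .
  have "mul Q (join Q X Y) W = cl (join S a b' \<cdot> s)" using J s b' by simp
  also have "\<dots> = cl (join S (a \<cdot> s) (b' \<cdot> s))" using join_mul_distrib b' s by simp
  also have "\<dots> = join Q (cl (a \<cdot> s)) (cl (b' \<cdot> s))" using quot_join_cl compat_mul_right b' s by simp
  also have "\<dots> = join Q (mul Q X W) (mul Q Y W)" using s ab b'(2)[symmetric] b'C by simp
  finally show "mul Q (join Q X Y) W = join Q (mul Q X W) (mul Q Y W)" .
qed

lemma quot_dist_inv_semigroup: "dist_inv_semigroup Q" unfolding dist_inv_semigroup_def dist_inv_semigroup_axioms_def using quot_inv_semigroup quot_distributive by blast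

lemma quot_relative_complement:
  assumes E1: "idem Q E1" and F1: "idem Q F1" and le: "leq Q F1 E1"
  shows "\<exists>G. idem Q G \<and> leq Q G E1 \<and> mul Q F1 G = zer Q \<and> join Q F1 G = E1"
proof -
  obtain e where e: "idem S e" "E1 = cl e" using quot_idem_lift E1 by blast
  obtain f0 where f0: "idem S f0" "F1 = cl f0" using quot_idem_lift F1 by blast
  define f where "f = e \<cdot> f0"
  have f: "idem S f" using e f0 f_def by simp
  have C: "e \<in> C" "f0 \<in> C" "f \<in> C" using e f0 f idem_in by blast+
  have "F1 = mul Q E1 F1" using inv_semigroup.idem_leq'[OF quot_inv_semigroup F1 E1] le by blast
  then have F1f: "F1 = cl f" using e f0 f_def C by simp
  have ef: "e \<cdot> f = f" using f_def e C by simp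
  define g where "g = ediff e f"
  have g: "idem S g" using g_def e f by simp
  have "mul Q F1 (cl g) = cl z" using F1f ediff_ortho e f g g_def C idem_in by simp
  moreover have "join Q F1 (cl g) = E1"
    using F1f quot_join_cl idem_compat f g ediff_props(4)[OF e(1) f] ef e g_def by simp
  moreover have "leq Q (cl g) E1" using cl_leq ediff_props e f g_def by simp
  ultimately show ?thesis using cl_idem[OF g] quot_zer by metis
qed

lemma quot_gen_boolean: "gen_boolean_idem Q"
  using dist_inv_semigroup.gen_boolean_idemI[OF quot_dist_inv_semigroup] quot_relative_complement by blast

lemma quot_boolean: "boolean_isg Q" unfolding boolean_isg_def using quot_distributive quot_gen_boolean by blast

end

section \<open>Cover-to-join maps and the Exel completion\<close>

lemma kernel_additive_ideal:
  assumes B: "dist_inv_semigroup B" and T: "dist_inv_semigroup T" and h: "bmorphism B T h"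
  shows "additive_ideal B {x \<in> car B. h x = zer T}"
  unfolding additive_ideal_def
proof (intro conjI ballI impI)
  interpret b: dist_inv_semigroup B by fact
  interpret t: dist_inv_semigroup T by fact
  have hom: "hom B T h" using h bmorphism_def by blast
  show "{x \<in> car B. h x = zer T} \<subseteq> car B" by blast
  fix s a assume "s \<in> car B" "a \<in> {x \<in> car B. h x = zer T}"
  then show "mul B s a \<in> {x \<in> car B. h x = zer T}" "mul B a s \<in> {x \<in> car B. h x = zer T}"
    using hom_mul[OF hom] hom_in[OF hom] by auto
next
  interpret t: dist_inv_semigroup T by fact
  fix a c assume "a \<in> {x \<in> car B. h x = zer T}" "c \<in> {x \<in> car B. h x = zer T}" "compat B a c"
  then show "join B a c \<in> {x \<in> car B. h x = zer T}"
    using h dist_inv_semigroup.join_in[OF B] unfolding bmorphism_def by auto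
qed

lemma additive_ideal_Inter:
  assumes "F \<noteq> {}" and "\<And>I. I \<in> F \<Longrightarrow> additive_ideal B I"
  shows "additive_ideal B (\<Inter>F)"
  unfolding additive_ideal_def
proof (intro conjI ballI impI)
  show "\<Inter>F \<subseteq> car B" using assms unfolding additive_ideal_def by blast
  fix s a assume "s \<in> car B" "a \<in> \<Inter>F"
  then show "mul B s a \<in> \<Inter>F" "mul B a s \<in> \<Inter>F" using assms(2) unfolding additive_ideal_def by blast+
next
  fix a b assume "a \<in> \<Inter>F" "b \<in> \<Inter>F" "compat B a b"
  then show "join B a b \<in> \<Inter>F" using assms(2) unfolding additive_ideal_def by blast
qed

lemma cover_image_lub:
  assumes S: "inv_semigroup S" and B: "dist_inv_semigroup B" and h: "hom S B \<beta>"
    and a: "a \<in> car S" and A: "is_cover S a A"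
  shows "is_lub_in B (car B) (\<beta> ` A) (join_set B (\<beta> ` A))" "leq B (join_set B (\<beta> ` A)) (\<beta> a)"
    "finite (\<beta> ` A)" "\<beta> ` A \<subseteq> down B (\<beta> a)"
proof -
  interpret b: dist_inv_semigroup B by fact
  show fin: "finite (\<beta> ` A)" using A unfolding is_cover_def by blast
  have "A \<subseteq> down S a" using A unfolding is_cover_def by blast
  then show sub: "\<beta> ` A \<subseteq> down B (\<beta> a)"
    unfolding down_def using hom_leq[OF S b.inv_semigroup_axioms h] hom_in[OF h] by blast
  obtain j where j: "is_lub_in B (car B) (\<beta> ` A) j" "leq B j (\<beta> a)"
    using b.finite_lub_below[OF fin sub] hom_in[OF h a] by blast
  then show "is_lub_in B (car B) (\<beta> ` A) (join_set B (\<beta> ` A))" "leq B (join_set B (\<beta> ` A)) (\<beta> a)"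
    using b.join_set_eq by auto
qed

lemma ck_gens_in_car:
  assumes S: "inv_semigroup S" and B: "bool_inv_semigroup B" and h: "hom S B \<beta>"
  shows "ck_gens S B \<beta> \<subseteq> car B"
proof
  interpret b: bool_inv_semigroup B by fact
  fix x assume "x \<in> ck_gens S B \<beta>"
  then obtain a A where "x = bdiff B (\<beta> a) (join_set B (\<beta> ` A))" "a \<in> car S" "is_cover S a A"
    unfolding ck_gens_def by blast
  then show "x \<in> car B" using cover_image_lub(2)[OF S b.dist_inv_semigroup_axioms h] by simp
qed

text \<open>The empty set covers 0, so the generators, and hence the ideal, contain 0.\<close>
lemma zer_in_ck_ideal:
  assumes S: "inv_semigroup S" and B: "bool_inv_semigroup B" and h: "hom S B \<beta>"
  shows "zer B \<in> ck_ideal S B \<beta>"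
proof -
  interpret s: inv_semigroup S by fact
  interpret b: bool_inv_semigroup B by fact
  have "is_cover S (zer S) {}" unfolding is_cover_def down_def using s.leq_zer by auto
  then have "bdiff B (\<beta> (zer S)) (join_set B {}) \<in> ck_gens S B \<beta>" unfolding ck_gens_def by force
  moreover have "bdiff B (\<beta> (zer S)) (join_set B {}) = zer B"
    using hom_zer[OF h] b.join_set_eq[OF b.lub_empty] by simp
  ultimately have "zer B \<in> ck_gens S B \<beta>" by simp
  then show ?thesis unfolding ck_ideal_def by blast
qed

lemma ck_ideal_quotient:
  assumes S: "inv_semigroup S" and B: "bool_inv_semigroup B" and h: "hom S B \<beta>"
  shows "ideal_quotient B (ck_ideal S B \<beta>)"
proof -
  interpret b: bool_inv_semigroup B by fact
  have "car B \<in> {I. additive_ideal B I \<and> ck_gens S B \<beta> \<subseteq> I}"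
    using ck_gens_in_car[OF assms] b.join_in unfolding additive_ideal_def by auto
  then have "additive_ideal B (ck_ideal S B \<beta>)"
    unfolding ck_ideal_def by (intro additive_ideal_Inter) auto
  then show ?thesis
    using zer_in_ck_ideal[OF assms] B unfolding ideal_quotient_def ideal_quotient_axioms_def by blast
qed

lemma ck_ideal_in_kernel:
  assumes S: "inv_semigroup S" and B: "bool_inv_semigroup B" and \<theta>: "cover_to_join S T \<theta>"
    and h: "hom S B \<beta>" and \<theta>1: "bmorphism B T \<theta>1" "\<forall>s\<in>car S. \<theta>1 (\<beta> s) = \<theta> s"
  shows "ck_ideal S B \<beta> \<subseteq> {x \<in> car B. \<theta>1 x = zer T}"
proof -
  interpret b: bool_inv_semigroup B by fact
  have T: "bool_inv_semigroup T" using \<theta> bool_inv_semigroupI unfolding cover_to_join_def by blast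
  interpret t: bool_inv_semigroup T by fact
  have hom1: "hom B T \<theta>1" using \<theta>1(1) bmorphism_def by blast
  have "ck_gens S B \<beta> \<subseteq> {x \<in> car B. \<theta>1 x = zer T}"
  proof
    fix x assume "x \<in> ck_gens S B \<beta>"
    then obtain a A where x: "x = bdiff B (\<beta> a) (join_set B (\<beta> ` A))"
      and a: "a \<in> car S" and A: "is_cover S a A"
      unfolding ck_gens_def by blast
    note cov = cover_image_lub[OF S b.dist_inv_semigroup_axioms h a A]
    have AS: "A \<subseteq> car S" using A unfolding is_cover_def down_def by blast
    have "\<theta>1 ` \<beta> ` A = \<theta> ` A"
      unfolding image_image using \<theta>1(2) AS by (intro image_cong) auto
    then have "is_lub_in T (car T) (\<theta> ` A) (\<theta>1 (join_set B (\<beta> ` A)))"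
      using bmorphism_join_set[OF b.dist_inv_semigroup_axioms t.dist_inv_semigroup_axioms \<theta>1(1)
          cov(3,4) hom_in[OF h a]] by simp
    moreover have "is_lub_in T (car T) (\<theta> ` A) (\<theta> a)" using \<theta> a A unfolding cover_to_join_def by blast
    ultimately have "\<theta>1 (join_set B (\<beta> ` A)) = \<theta> a" by (rule t.lub_unique)
    then have "\<theta>1 (join_set B (\<beta> ` A)) = \<theta>1 (\<beta> a)" using \<theta>1(2) a by simp
    then show "x \<in> {x \<in> car B. \<theta>1 x = zer T}"
      using bmorphism_bdiff[OF B T \<theta>1(1) cov(2)] x b.bdiff_in[OF cov(2)] hom_in[OF hom1 hom_in[OF h a]]
      by simp
  qed
  then show ?thesis
    using kernel_additive_ideal[OF b.dist_inv_semigroup_axioms t.dist_inv_semigroup_axioms \<theta>1(1)]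
    unfolding ck_ideal_def by blast
qed

context ideal_quotient
begin

lemma cl_bmorphism: "bmorphism S Q cl"
  unfolding bmorphism_def using cl_hom quot_join_cl by blast

lemma bmorphism_respects_eps:
  assumes T: "dist_inv_semigroup T" and h: "bmorphism S T h"
    and IK: "I \<subseteq> {x \<in> C. h x = zer T}" and xy: "(x, y) \<in> E"
  shows "h x = h y"
proof -
  interpret t: dist_inv_semigroup T by fact
  have hom: "hom S T h" using h bmorphism_def by blast
  have collapse: "h a = h c" if ca: "leq S c a" and I: "bdiff S a c \<in> I" for a c
  proof -
    have cc: "compat S c (bdiff S a c)" using compat_below[OF ca bdiff_leq[OF ca]] .
    have "h (join S c (bdiff S a c)) = join T (h c) (h (bdiff S a c))"
      using h cc compat_in[OF cc] unfolding bmorphism_def by blast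
    then have "h a = join T (h c) (zer T)" using bdiff_join[OF ca] IK I by auto
    then show ?thesis using hom_in[OF hom leq_in_left[OF ca]] by simp
  qed
  obtain c where "leq S c x" "leq S c y" "bdiff S x c \<in> I" "bdiff S y c \<in> I" using epsE[OF xy] .
  then show ?thesis using collapse[of c x] collapse[of c y] by simp
qed

lemma quot_lift_bmorphism:
  assumes h: "bmorphism S T h" and resp: "\<And>x y. (x, y) \<in> E \<Longrightarrow> h x = h y"
  shows "\<exists>g. bmorphism Q T g \<and> (\<forall>a\<in>C. g (cl a) = h a)"
proof -
  have hom: "hom S T h" using h bmorphism_def by blast
  have hj: "\<And>x y. compat S x y \<Longrightarrow> h (join S x y) = join T (h x) (h y)"
    using h compat_in unfolding bmorphism_def by blast
  define g where "g X = h (SOME x. x \<in> X)" for X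
  have gcl: "g (cl a) = h a" if "a \<in> C" for a
    using resp some_in_class[OF that] g_def by simp
  have "hom Q T g"
    unfolding hom_def
  proof (intro conjI ballI)
    fix X assume "X \<in> car Q"
    then obtain a where "a \<in> C" "X = cl a" using quot_cl_surj by blast
    then show "g X \<in> car T" using gcl hom_in[OF hom] by simp
  next
    fix X Y assume "X \<in> car Q" "Y \<in> car Q"
    then obtain a c where "a \<in> C" "c \<in> C" "X = cl a" "Y = cl c" using quot_cl_surj by metis
    then show "g (mul Q X Y) = mul T (g X) (g Y)" using gcl hom_mul[OF hom] by simp
  next
    show "g (zer Q) = zer T" using gcl quot_zer hom_zer[OF hom] by simp
  qed
  moreover have "g (join Q X Y) = join T (g X) (g Y)"
    if X: "X \<in> car Q" and Y: "Y \<in> car Q" and XY: "compat Q X Y" for X Y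
  proof -
    obtain a c where ac: "a \<in> C" "X = cl a" "c \<in> C" "Y = cl c" using quot_cl_surj X Y by metis
    obtain c' where c': "compat S a c'" "cl c' = cl c" using compat_representative ac XY by blast
    have c'C: "c' \<in> C" using c' compat_in by blast
    have "g (join Q X Y) = h (join S a c')" using quot_join_cl[OF c'(1)] ac c' gcl by simp
    also have "\<dots> = join T (h a) (h c')" using hj[OF c'(1)] .
    also have "\<dots> = join T (g X) (g Y)" using gcl ac c'C c'(2)[symmetric] by simp
    finally show ?thesis .
  qed
  ultimately show ?thesis using gcl unfolding bmorphism_def by blast
qed

lemma bmorphism_comp_cl:
  assumes g: "bmorphism Q T g"
  shows "bmorphism S T (\<lambda>x. g (cl x))"
proof -
  have "g (cl (join S a b)) = join T (g (cl a)) (g (cl b))" if "compat S a b" for a b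
    using g quot_join_cl[OF that] cl_compat[OF that] compat_in[OF that] unfolding bmorphism_def by force
  then show ?thesis
    using hom_comp[OF cl_hom, of T g] g unfolding bmorphism_def comp_def by blast
qed

end

lemma tau_cover_to_join:
  assumes S: "inv_semigroup S" and B: "bool_inv_semigroup B" and h: "hom S B \<beta>"
  shows "cover_to_join S (exel S B \<beta>) (tau S B \<beta>)"
proof -
  interpret q: ideal_quotient B "ck_ideal S B \<beta>" using ck_ideal_quotient[OF assms] .
  have exel: "exel S B \<beta> = q.Q" and tau: "tau S B \<beta> = (\<lambda>x. q.cl (\<beta> x))"
    by (auto simp: exel_def tau_def nu_def)
  have "is_lub_in q.Q (car q.Q) ((\<lambda>x. q.cl (\<beta> x)) ` A) (q.cl (\<beta> a))"
    if a: "a \<in> car S" and A: "is_cover S a A" for a A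
  proof -
    note cov = cover_image_lub[OF S q.dist_inv_semigroup_axioms h a A]
    have "bdiff B (\<beta> a) (join_set B (\<beta> ` A)) \<in> ck_ideal S B \<beta>"
      using a A unfolding ck_gens_def ck_ideal_def by blast
    then have "(\<beta> a, join_set B (\<beta> ` A)) \<in> q.E"
      using q.epsI[OF cov(2) q.leq_refl] q.zer_in_ideal q.leq_in_left[OF cov(2)] by simp
    then have "q.cl (\<beta> a) = q.cl (join_set B (\<beta> ` A))"
      using q.cl_eq q.leq_in_left[OF cov(2)] hom_in[OF h a] by blast
    then show ?thesis
      using bmorphism_join_set[OF q.dist_inv_semigroup_axioms q.quot_dist_inv_semigroup q.cl_bmorphism
          cov(3,4) hom_in[OF h a]]
      by (simp add: image_image)
  qed
  then show ?thesis
    unfolding cover_to_join_def exel tau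
    using q.quot_boolean hom_comp[OF h q.cl_hom] by (simp add: comp_def)
qed

lemma exel_universal:
  fixes T :: "'c isg"
  assumes S: "inv_semigroup S" and \<beta>: "booleanization S B \<beta> TYPE('c)" and \<theta>: "cover_to_join S T \<theta>"
  shows "\<exists>\<theta>'. bmorphism (exel S B \<beta>) T \<theta>' \<and> (\<forall>s\<in>car S. \<theta>' (tau S B \<beta> s) = \<theta> s)
    \<and> (\<forall>\<theta>''. bmorphism (exel S B \<beta>) T \<theta>'' \<and> (\<forall>s\<in>car S. \<theta>'' (tau S B \<beta> s) = \<theta> s)
            \<longrightarrow> (\<forall>x\<in>car (exel S B \<beta>). \<theta>'' x = \<theta>' x))"
proof -
  have B: "bool_inv_semigroup B" and h: "hom S B \<beta>"
    using \<beta> bool_inv_semigroupI unfolding booleanization_def by blast+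
  interpret q: ideal_quotient B "ck_ideal S B \<beta>" using ck_ideal_quotient[OF S B h] .
  have exel: "exel S B \<beta> = q.Q" and tau: "\<And>s. tau S B \<beta> s = q.cl (\<beta> s)"
    by (auto simp: exel_def tau_def nu_def)
  have T: "boolean_isg T" and h\<theta>: "hom S T \<theta>" using \<theta> unfolding cover_to_join_def by blast+
  have "\<exists>\<theta>1. bmorphism B T \<theta>1 \<and> (\<forall>s\<in>car S. \<theta>1 (\<beta> s) = \<theta> s)
      \<and> (\<forall>g. bmorphism B T g \<and> (\<forall>s\<in>car S. g (\<beta> s) = \<theta> s) \<longrightarrow> (\<forall>x\<in>car B. g x = \<theta>1 x))"
    using \<beta> T h\<theta> unfolding booleanization_def by blast
  then obtain \<theta>1 where \<theta>1: "bmorphism B T \<theta>1" "\<forall>s\<in>car S. \<theta>1 (\<beta> s) = \<theta> s"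
    and uniq1: "\<forall>g. bmorphism B T g \<and> (\<forall>s\<in>car S. g (\<beta> s) = \<theta> s) \<longrightarrow> (\<forall>x\<in>car B. g x = \<theta>1 x)"
    by blast
  have "\<And>x y. (x, y) \<in> q.E \<Longrightarrow> \<theta>1 x = \<theta>1 y"
    using q.bmorphism_respects_eps[OF bool_inv_semigroup.axioms(1)[OF bool_inv_semigroupI[OF T]] \<theta>1(1)
        ck_ideal_in_kernel[OF S B \<theta> h \<theta>1]] .
  then obtain \<theta>' where \<theta>': "bmorphism q.Q T \<theta>'" "\<forall>a\<in>car B. \<theta>' (q.cl a) = \<theta>1 a"
    using q.quot_lift_bmorphism[OF \<theta>1(1)] by blast
  have "\<theta>'' X = \<theta>' X"
    if \<theta>'': "bmorphism q.Q T \<theta>''" "\<forall>s\<in>car S. \<theta>'' (q.cl (\<beta> s)) = \<theta> s" and X: "X \<in> car q.Q"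
    for \<theta>'' X
  proof -
    obtain x where x: "x \<in> car B" "X = q.cl x" using q.quot_cl_surj[OF X] by blast
    have "\<theta>'' (q.cl x) = \<theta>1 x" using uniq1 q.bmorphism_comp_cl[OF \<theta>''(1)] \<theta>''(2) x(1) by blast
    then show ?thesis using \<theta>'(2) x by simp
  qed
  moreover have "\<forall>s\<in>car S. \<theta>' (q.cl (\<beta> s)) = \<theta> s" using \<theta>'(2) \<theta>1(2) hom_in[OF h] by simp
  ultimately show ?thesis
    unfolding exel tau using \<theta>'(1) by blast
qed

theorem theorem1p3:
  fixes S :: "'a isg" and B :: "'b isg" and \<beta> :: "'a \<Rightarrow> 'b"
  assumes "inverse_semigroup S"
    and "booleanization S B \<beta> TYPE('c)"
  shows "cover_to_join S (exel S B \<beta>) (tau S B \<beta>)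
    \<and> (\<forall>(T :: 'c isg) \<theta>. cover_to_join S T \<theta> \<longrightarrow>
         (\<exists>\<theta>'. bmorphism (exel S B \<beta>) T \<theta>'
              \<and> (\<forall>s\<in>car S. \<theta>' (tau S B \<beta> s) = \<theta> s)
              \<and> (\<forall>\<theta>''. bmorphism (exel S B \<beta>) T \<theta>''
                      \<and> (\<forall>s\<in>car S. \<theta>'' (tau S B \<beta> s) = \<theta> s)
                      \<longrightarrow> (\<forall>x\<in>car (exel S B \<beta>). \<theta>'' x = \<theta>' x))))"
proof -
  have S: "inv_semigroup S" using assms(1) inv_semigroup_def by blast
  have B: "bool_inv_semigroup B" and h: "hom S B \<beta>"
    using assms(2) bool_inv_semigroupI unfolding booleanization_def by blast+
  show ?thesis
    using tau_cover_to_join[OF S B h] exel_universal[OF S assms(2)] by blast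
qed

end
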